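(* Let $d_1,\dots,d_n\in\mathbb N$ and $M'_{(d_i)}=\{\mathbf m\in M_{(d_i);(d_j)}: m_{i,j}=0 \text{ for all } j<i-1\}$. (1) $M'_{(d_i)}$ is a lower ideal of the poset $(M_{(d_i);(d_j)},\le)$. (2) If $\mathbf m\in M'_{(d_i)}$, then $m_{\le i,\ge j}=d_j+d_{j+1}+\dots+d_i$ for all $i\ge j$. (3) For $\mathbf m,\mathbf m'\in M'_{(d_i)}$, $\mathbf m\le\mathbf m'$ if and only if $m_{\le i,\ge j}\le m'_{\le i,\ge j}$ for all $i<j$. (4) If $\mathbf m\in M'_{(d_i)}$, then $m_{i,i-1}=m_{\le i-1,\ge i}$ for all $i\in[2,n]$. (5) The map $\Phi$ sending a multisegment to its matrix is a bijection from $M_{(d_i)}$ onto $M'_{(d_i)}$.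
   Context: All indices range over $[1,n]$. $M_{(d_i);(d_j)}$ is the set of $n\times n$ matrices with entries in $\mathbb N$ whose $i$-th row sum and $i$-th column sum both equal $d_i$. Partial sums: $m_{\le i,\ge j}=\sum_{i'\le i,\,j'\ge j}m_{i',j'}$. Partial order: partition $[1,d]$ ($d=\sum d_i$) into consecutive intervals $B_1<\dots<B_n$ with $|B_i|=d_i$, let $S_{(d_i)}\subseteq S_d$ be the subgroup preserving each $B_i$; the map $\psi(w)_{i,j}=|w(B_i)\cap B_j|$ induces a bijection $S_{(d_i)}\backslash S_d/S_{(d_i)}\to M_{(d_i);(d_j)}$; let $w_{\mathbf m}$ be the longest element of the double coset of $\mathbf m$, and set $\mathbf m\le\mathbf m'$ iff $w_{\mathbf m}\le w_{\mathbf m'}$ in Bruhat order of $S_d$ (generated by adjacent transpositions). A segment is an integer interval $[i,j]$, $i\le j$; $M_{(d_i)}$ is the set of multisegments (finite formal sums of segments) in which each $i\in[1,n]$ occurs exactly $d_i$ times as an element of a segment (and no integer outside $[1,n]$ occurs). $\Phi(\mathbf m)$ is the $n\times n$ matrix with entry at $(i,j)$: the multiplicity of $[i,j]$ in $\mathbf m$ if $i\le j$; the number of segments $[k,l]$ of $\mathbf m$ (with multiplicity) with $k\le j$ and $l\ge i$ if $j=i-1$; and $0$ if $j<i-1$. *)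

theory Defs
  imports "HOL-Combinatorics.Combinatorics" "HOL-Library.Multiset"
begin

text \<open>Matrices are functions nat => nat => nat, indices in [1,n]; entries outside
  [1,n] x [1,n] are required to be 0 (canonical representation).\<close>

definition Mmat :: "nat \<Rightarrow> (nat \<Rightarrow> nat) \<Rightarrow> (nat \<Rightarrow> nat \<Rightarrow> nat) set" where
  "Mmat n d = {m. (\<forall>i j. (i \<notin> {1..n} \<or> j \<notin> {1..n}) \<longrightarrow> m i j = 0)
      \<and> (\<forall>i\<in>{1..n}. (\<Sum>j=1..n. m i j) = d i \<and> (\<Sum>j=1..n. m j i) = d i)}"

definition Mprime :: "nat \<Rightarrow> (nat \<Rightarrow> nat) \<Rightarrow> (nat \<Rightarrow> nat \<Rightarrow> nat) set" where
  "Mprime n d = {m \<in> Mmat n d. \<forall>i\<in>{1..n}. \<forall>j\<in>{1..n}. j + 1 < i \<longrightarrow> m i j = 0}"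

definition psum :: "nat \<Rightarrow> (nat \<Rightarrow> nat \<Rightarrow> nat) \<Rightarrow> nat \<Rightarrow> nat \<Rightarrow> nat" where
  "psum n m i j = (\<Sum>i'\<in>{1..i}. \<Sum>j'\<in>{j..n}. m i' j')"

definition dtot :: "nat \<Rightarrow> (nat \<Rightarrow> nat) \<Rightarrow> nat" where
  "dtot n d = (\<Sum>k=1..n. d k)"

definition block :: "(nat \<Rightarrow> nat) \<Rightarrow> nat \<Rightarrow> nat set" where
  "block d i = {(\<Sum>k=1..<i. d k) + 1 .. (\<Sum>k=1..i. d k)}"

definition psi :: "nat \<Rightarrow> (nat \<Rightarrow> nat) \<Rightarrow> (nat \<Rightarrow> nat) \<Rightarrow> nat \<Rightarrow> nat \<Rightarrow> nat" where
  "psi n d w i j = (if i \<in> {1..n} \<and> j \<in> {1..n} then card (w ` block d i \<inter> block d j) else 0)"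

definition coxlen :: "nat \<Rightarrow> (nat \<Rightarrow> nat) \<Rightarrow> nat" where
  "coxlen D w = (LEAST k. \<exists>ts. length ts = k \<and> set ts \<subseteq> {1..<D} \<and>
      w = foldr (\<lambda>i f. transpose i (Suc i) \<circ> f) ts id)"

definition bruhat_step :: "nat \<Rightarrow> (nat \<Rightarrow> nat) \<Rightarrow> (nat \<Rightarrow> nat) \<Rightarrow> bool" where
  "bruhat_step D u w \<longleftrightarrow> u permutes {1..D} \<and>
     (\<exists>a\<in>{1..D}. \<exists>b\<in>{1..D}. a \<noteq> b \<and> w = u \<circ> transpose a b \<and> coxlen D u < coxlen D w)"

definition bruhat_le :: "nat \<Rightarrow> (nat \<Rightarrow> nat) \<Rightarrow> (nat \<Rightarrow> nat) \<Rightarrow> bool" where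
  "bruhat_le D = (bruhat_step D)\<^sup>*\<^sup>*"

definition dcoset :: "nat \<Rightarrow> (nat \<Rightarrow> nat) \<Rightarrow> (nat \<Rightarrow> nat \<Rightarrow> nat) \<Rightarrow> (nat \<Rightarrow> nat) set" where
  "dcoset n d m = {w. w permutes {1..dtot n d} \<and> psi n d w = m}"

definition longest :: "nat \<Rightarrow> (nat \<Rightarrow> nat) \<Rightarrow> (nat \<Rightarrow> nat \<Rightarrow> nat) \<Rightarrow> (nat \<Rightarrow> nat)" where
  "longest n d m = (THE w. w \<in> dcoset n d m \<and>
      (\<forall>w'\<in>dcoset n d m. coxlen (dtot n d) w' \<le> coxlen (dtot n d) w))"

definition mat_le :: "nat \<Rightarrow> (nat \<Rightarrow> nat) \<Rightarrow> (nat \<Rightarrow> nat \<Rightarrow> nat) \<Rightarrow> (nat \<Rightarrow> nat \<Rightarrow> nat) \<Rightarrow> bool" where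
  "mat_le n d m m' = bruhat_le (dtot n d) (longest n d m) (longest n d m')"

text \<open>Multisegments: finite multisets of integer intervals [a,b] (a <= b), as pairs (a,b).\<close>
definition Mseg :: "nat \<Rightarrow> (nat \<Rightarrow> nat) \<Rightarrow> (int \<times> int) multiset set" where
  "Mseg n d = {ms. (\<forall>s\<in>#ms. fst s \<le> snd s) \<and>
      (\<forall>k::int. size (filter_mset (\<lambda>(a,b). a \<le> k \<and> k \<le> b) ms)
                 = (if 1 \<le> k \<and> k \<le> int n then d (nat k) else 0))}"

definition Phi :: "nat \<Rightarrow> (int \<times> int) multiset \<Rightarrow> nat \<Rightarrow> nat \<Rightarrow> nat" where
  "Phi n ms i j = (if i \<in> {1..n} \<and> j \<in> {1..n} then
       (if i \<le> j then count ms (int i, int j)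
        else if j + 1 = i then size (filter_mset (\<lambda>(k,l). k \<le> int j \<and> int i \<le> l) ms)
        else 0)
     else 0)"

end

theory Submission
  imports Defs "HOL-Library.Disjoint_Sets"
begin

(* Write s_k = d_1 + ... + d_k, so that B_i = [s_(i-1) + 1, s_i], and for a permutation w of [1, D]
   let rank w x t be the number of y <= x with w y >= t.  The Coxeter length of w is its number
   of inversions, and u <= v in the Bruhat order iff rank u <= rank v pointwise.  The longest
   element of the double coset of m is decreasing on every block B_i and on the preimage of every
   block B_j; the rank function of such a permutation is the capped linear interpolation of its
   values at the block corners, and these are the partial sums m_(<=k, >=j).  Hence m <= m' iff
   all partial sums of m are bounded by those of m'.

   Counting with the margins gives m_(<=k, >=j) + s_(j-1) = s_k + (sum of the m_(i,j') with
   i > k and j' < j).  So the partial sums with j <= k + 1 are minimal, among matrices with the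
   given margins, exactly for the matrices of M'; this yields (1), (2) and (4), and by (2) only
   the partial sums with i < j matter in (3).  Finally Phi is inverted by reading the
   multiplicity of [i, j] off the entry m_(i,j), the subdiagonal entries being recovered by (4). *)

section \<open>Partial sums of matrices with prescribed margins\<close>

lemma sum_interval_split:
  fixes f :: "nat \<Rightarrow> 'a::comm_monoid_add"
  assumes "a \<le> j" "j \<le> Suc b"
  shows "(\<Sum>x=a..b. f x) = (\<Sum>x=a..<j. f x) + (\<Sum>x=j..b. f x)"
proof -
  have "{a..b} = {a..<j} \<union> {j..b}" using assms by auto
  then show ?thesis by (simp add: sum.union_disjoint ivl_disj_int)
qed

lemma Mmat_row_sum: "m \<in> Mmat n d \<Longrightarrow> i \<in> {1..n} \<Longrightarrow> (\<Sum>j=1..n. m i j) = d i"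
  by (simp add: Mmat_def)

lemma Mmat_col_sum: "m \<in> Mmat n d \<Longrightarrow> j \<in> {1..n} \<Longrightarrow> (\<Sum>i=1..n. m i j) = d j"
  by (simp add: Mmat_def)

lemma Mmat_outside: "m \<in> Mmat n d \<Longrightarrow> i \<notin> {1..n} \<or> j \<notin> {1..n} \<Longrightarrow> m i j = 0"
  by (simp add: Mmat_def)

lemma MprimeD: "m \<in> Mprime n d \<Longrightarrow> m \<in> Mmat n d"
  by (simp add: Mprime_def)

lemma Mprime_below_subdiagonal: "m \<in> Mprime n d \<Longrightarrow> j + 1 < i \<Longrightarrow> m i j = 0"
  unfolding Mprime_def Mmat_def by (cases "i \<in> {1..n} \<and> j \<in> {1..n}") auto

text \<open>Counting the entries of the rows \<open>\<le> k\<close> and of the columns \<open>< j\<close> in two ways.\<close>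

lemma psum_margin_identity:
  assumes m: "m \<in> Mmat n d" and k: "k \<le> n" and j: "1 \<le> j" "j \<le> Suc n"
  shows "psum n m k j + (\<Sum>j'=1..<j. d j') = (\<Sum>i=1..k. d i) + (\<Sum>i=Suc k..n. \<Sum>j'=1..<j. m i j')"
proof -
  have rows: "(\<Sum>i=1..k. d i) = (\<Sum>i=1..k. \<Sum>j'=1..<j. m i j') + psum n m k j"
  proof -
    have "(\<Sum>i=1..k. d i) = (\<Sum>i=1..k. \<Sum>j'=1..n. m i j')"
      using k Mmat_row_sum[OF m] by (intro sum.cong) auto
    also have "\<dots> = (\<Sum>i=1..k. (\<Sum>j'=1..<j. m i j') + (\<Sum>j'=j..n. m i j'))"
      using sum_interval_split[OF j, where 'a = nat] by simp
    finally show ?thesis by (simp add: sum.distrib psum_def)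
  qed
  have cols: "(\<Sum>j'=1..<j. d j') = (\<Sum>i=1..k. \<Sum>j'=1..<j. m i j') + (\<Sum>i=Suc k..n. \<Sum>j'=1..<j. m i j')"
  proof -
    have "(\<Sum>j'=1..<j. d j') = (\<Sum>j'=1..<j. \<Sum>i=1..n. m i j')"
      using j Mmat_col_sum[OF m] by (intro sum.cong) auto
    also have "\<dots> = (\<Sum>i=1..n. \<Sum>j'=1..<j. m i j')" by (rule sum.swap)
    also have "\<dots> = (\<Sum>i=1..k. \<Sum>j'=1..<j. m i j') + (\<Sum>i=Suc k..n. \<Sum>j'=1..<j. m i j')"
      using sum_interval_split[of 1 "Suc k" n] k by (simp add: atLeastLessThanSuc_atLeastAtMost)
    finally show ?thesis .
  qed
  show ?thesis using rows cols by simp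
qed

lemma psum_Mprime:
  assumes m: "m \<in> Mprime n d" and ij: "1 \<le> j" "j \<le> i" "i \<le> n"
  shows "psum n m i j = (\<Sum>k=j..i. d k)"
proof -
  have "(\<Sum>r=Suc i..n. \<Sum>c=1..<j. m r c) = 0"
    using ij by (auto intro!: sum.neutral Mprime_below_subdiagonal[OF m])
  then have "psum n m i j + (\<Sum>k=1..<j. d k) = (\<Sum>k=1..i. d k)"
    using psum_margin_identity[OF MprimeD[OF m], of i j] ij by simp
  moreover have "(\<Sum>k=1..i. d k) = (\<Sum>k=1..<j. d k) + (\<Sum>k=j..i. d k)"
    using sum_interval_split[of 1 j i d] ij by simp
  ultimately show ?thesis by simp
qed

lemma Mprime_subdiagonal_eq_psum:
  assumes m: "m \<in> Mprime n d" and i: "2 \<le> i" "i \<le> n"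
  shows "m i (i - 1) = psum n m (i - 1) i"
proof -
  have "{1..<i} = insert (i - 1) {1..<i - 1}"
    using i by auto
  moreover have "(\<Sum>c=1..<i - 1. m i c) = 0"
    using i by (auto intro!: sum.neutral Mprime_below_subdiagonal[OF m])
  ultimately have "(\<Sum>c=1..<i. m i c) = m i (i - 1)"
    by simp
  moreover have "(\<Sum>r=Suc i..n. \<Sum>c=1..<i. m r c) = 0"
    using i by (auto intro!: sum.neutral Mprime_below_subdiagonal[OF m])
  ultimately have "(\<Sum>r=i..n. \<Sum>c=1..<i. m r c) = m i (i - 1)"
    using i by (subst sum.atLeast_Suc_atMost) auto
  then have "psum n m (i - 1) i + (\<Sum>k=1..<i. d k) = (\<Sum>k=1..i - 1. d k) + m i (i - 1)"
    using psum_margin_identity[OF MprimeD[OF m], of "i - 1" i] i by simp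
  moreover have "(\<Sum>k=1..<i. d k) = (\<Sum>k=1..i - 1. d k)"
    using i by (intro sum.cong) auto
  ultimately show ?thesis by simp
qed

lemma Mprime_if_psum_le:
  assumes m: "m \<in> Mprime n d" and m': "m' \<in> Mmat n d"
    and le: "\<And>k j. k \<in> {1..n} \<Longrightarrow> j \<in> {1..n} \<Longrightarrow> psum n m' k j \<le> psum n m k j"
  shows "m' \<in> Mprime n d"
proof -
  have "m' r c = 0" if r: "r \<in> {1..n}" and c: "c \<in> {1..n}" and rc: "c + 1 < r" for r c
  proof -
    have kj: "r - 1 \<in> {1..n}" "c + 1 \<in> {1..n}"
      using r c rc by auto
    have "(\<Sum>i=r..n. \<Sum>j'=1..<c + 1. m i j') = 0"
      using rc by (auto intro!: sum.neutral Mprime_below_subdiagonal[OF m])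
    then have "psum n m (r - 1) (c + 1) + (\<Sum>j'=1..<c + 1. d j') = (\<Sum>i=1..r - 1. d i)"
      using psum_margin_identity[OF MprimeD[OF m], of "r - 1" "c + 1"] kj rc by simp
    moreover have "psum n m' (r - 1) (c + 1) + (\<Sum>j'=1..<c + 1. d j')
        = (\<Sum>i=1..r - 1. d i) + (\<Sum>i=r..n. \<Sum>j'=1..<c + 1. m' i j')"
      using psum_margin_identity[OF m', of "r - 1" "c + 1"] kj rc by simp
    ultimately have "(\<Sum>i=r..n. \<Sum>j'=1..<c + 1. m' i j') = 0"
      using le[OF kj] by linarith
    then show ?thesis using r c by simp
  qed
  then show ?thesis using m' by (auto simp: Mprime_def)
qed

section \<open>Multisegments\<close>

lemma Mseg_segment_bounds:
  assumes ms: "ms \<in> Mseg n d" and s: "s \<in># ms"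
  shows "1 \<le> fst s \<and> fst s \<le> snd s \<and> snd s \<le> int n"
proof -
  obtain a b where ab: "s = (a, b)" by force
  have le: "a \<le> b" using ms s ab by (auto simp: Mseg_def)
  have covered: "size (filter_mset (\<lambda>(a, b). a \<le> k \<and> k \<le> b) ms) > 0" if "a \<le> k" "k \<le> b" for k
    using s ab that by (auto simp: nonempty_has_size[symmetric] intro!: exI[of _ s])
  then have "\<And>k. a \<le> k \<Longrightarrow> k \<le> b \<Longrightarrow> 1 \<le> k \<and> k \<le> int n"
    using ms by (fastforce simp: Mseg_def split: if_splits)
  then show ?thesis using ab le by auto
qed

lemma Mseg_count_outside:
  "ms \<in> Mseg n d \<Longrightarrow> \<not> (1 \<le> fst s \<and> fst s \<le> snd s \<and> snd s \<le> int n) \<Longrightarrow> count ms s = 0"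
  using Mseg_segment_bounds by (meson not_in_iff)

definition index_pairs :: "nat \<Rightarrow> (int \<times> int) set" where
  "index_pairs n = (\<lambda>(i, j). (int i, int j)) ` ({1..n} \<times> {1..n})"

lemma sum_index_pairs: "(\<Sum>s\<in>index_pairs n. f s) = (\<Sum>i=1..n. \<Sum>j=1..n. f (int i, int j))"
proof -
  have "inj_on (\<lambda>(i::nat, j::nat). (int i, int j)) ({1..n} \<times> {1..n})"
    by (auto simp: inj_on_def)
  then have "(\<Sum>s\<in>index_pairs n. f s) = (\<Sum>p\<in>{1..n} \<times> {1..n}. f (int (fst p), int (snd p)))"
    unfolding index_pairs_def by (subst sum.reindex) (auto simp: case_prod_beta)
  then show ?thesis
    by (simp add: sum.cartesian_product case_prod_beta)
qed

lemma size_filter_mset_index_pairs: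
  assumes "set_mset ms \<subseteq> index_pairs n"
  shows "size (filter_mset Q ms) =
     (\<Sum>i=1..n. \<Sum>j=1..n. if Q (int i, int j) then count ms (int i, int j) else 0)"
proof -
  have "size (filter_mset Q ms) = (\<Sum>s\<in>set_mset (filter_mset Q ms). count (filter_mset Q ms) s)"
    by (simp add: size_multiset_overloaded_eq)
  also have "\<dots> = (\<Sum>s\<in>index_pairs n. count (filter_mset Q ms) s)"
    using assms by (intro sum.mono_neutral_left) (auto simp: index_pairs_def)
  finally show ?thesis by (simp add: sum_index_pairs)
qed

lemma Mseg_subset_index_pairs: "ms \<in> Mseg n d \<Longrightarrow> set_mset ms \<subseteq> index_pairs n"
proof
  fix s assume "ms \<in> Mseg n d" "s \<in># ms"
  then have h: "1 \<le> fst s \<and> fst s \<le> snd s \<and> snd s \<le> int n"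
    by (rule Mseg_segment_bounds)
  then have "s = (\<lambda>(i, j). (int i, int j)) (nat (fst s), nat (snd s))"
    by auto
  moreover have "(nat (fst s), nat (snd s)) \<in> {1..n} \<times> {1..n}"
    using h by auto
  ultimately show "s \<in> index_pairs n"
    unfolding index_pairs_def by blast
qed

lemma Mseg_coverage:
  assumes "ms \<in> Mseg n d" "k \<in> {1..n}"
  shows "d k = (\<Sum>i=1..n. \<Sum>j=1..n. if i \<le> k \<and> k \<le> j then count ms (int i, int j) else 0)"
proof -
  have "size (filter_mset (\<lambda>(a, b). a \<le> int k \<and> int k \<le> b) ms) = d k"
    using assms by (auto simp: Mseg_def)
  then show ?thesis using size_filter_mset_index_pairs[OF Mseg_subset_index_pairs[OF assms(1)]] by simp
qed

lemma sum_rectangle: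
  fixes g :: "nat \<Rightarrow> nat \<Rightarrow> nat"
  assumes "a \<le> n" "1 \<le> b"
  shows "(\<Sum>i=1..n. \<Sum>j=1..n. if i \<le> a \<and> b \<le> j then g i j else 0) = (\<Sum>i=1..a. \<Sum>j=b..n. g i j)"
proof -
  have rows: "{i\<in>{1..n}. i \<le> a} = {1..a}" and cols: "{j\<in>{1..n}. b \<le> j} = {b..n}"
    using assms by auto
  have "(\<Sum>i=1..n. \<Sum>j=1..n. if i \<le> a \<and> b \<le> j then g i j else 0)
     = (\<Sum>i=1..n. if i \<le> a then (\<Sum>j=1..n. if b \<le> j then g i j else 0) else 0)"
    by (intro sum.cong) auto
  also have "\<dots> = (\<Sum>i=1..n. if i \<le> a then (\<Sum>j=b..n. g i j) else 0)"
    by (simp only: sum.inter_filter[symmetric] cols finite_atLeastAtMost)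
  also have "\<dots> = (\<Sum>i=1..a. \<Sum>j=b..n. g i j)"
    by (simp only: sum.inter_filter[symmetric] rows finite_atLeastAtMost)
  finally show ?thesis .
qed

lemma sum_row_delta:
  fixes g :: "nat \<Rightarrow> nat \<Rightarrow> nat"
  assumes "i \<in> {1..n}"
  shows "(\<Sum>i'=1..n. \<Sum>j=1..n. if i' = i \<and> P j then g i' j else 0) = (\<Sum>j=1..n. if P j then g i j else 0)"
proof -
  have "(\<Sum>i'=1..n. \<Sum>j=1..n. if i' = i \<and> P j then g i' j else 0)
      = (\<Sum>i'=1..n. if i' = i then (\<Sum>j=1..n. if P j then g i' j else 0) else 0)"
    by (intro sum.cong) auto
  then show ?thesis using assms by (simp add: sum.delta)
qed

lemma sum_col_delta:
  fixes g :: "nat \<Rightarrow> nat \<Rightarrow> nat"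
  assumes "j \<in> {1..n}"
  shows "(\<Sum>i=1..n. \<Sum>j'=1..n. if j' = j \<and> P i then g i j' else 0) = (\<Sum>i=1..n. if P i then g i j else 0)"
proof -
  have "(\<Sum>i=1..n. \<Sum>j'=1..n. if j' = j \<and> P i then g i j' else 0)
      = (\<Sum>i=1..n. if P i then (\<Sum>j'=1..n. if j' = j then g i j' else 0) else 0)"
    by (intro sum.cong) auto
  also have "\<dots> = (\<Sum>i=1..n. if P i then g i j else 0)"
    using assms by (intro sum.cong refl) (auto simp: sum.delta)
  finally show ?thesis .
qed

text \<open>The segments through \<open>i\<close> either start at \<open>i\<close>, and are counted in row \<open>i\<close> on or right of
  the diagonal, or start before \<open>i\<close>, and are counted by the subdiagonal entry \<open>(i, i - 1)\<close>;
  dually for columns.\<close>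

lemma Phi_row_sum:
  assumes ms: "ms \<in> Mseg n d" and i: "i \<in> {1..n}"
  shows "(\<Sum>j=1..n. Phi n ms i j) = d i"
proof -
  define c where "c a b = count ms (int a, int b)" for a b
  define X where "X = size (filter_mset (\<lambda>(k, l). k \<le> int (i - 1) \<and> int i \<le> l) ms)"
  have "(\<Sum>j=1..n. Phi n ms i j) = (\<Sum>j=1..n. (if i \<le> j then c i j else 0) + (if j = i - 1 then X else 0))"
    using i by (intro sum.cong) (auto simp: Phi_def c_def X_def)
  also have "\<dots> = (\<Sum>j=1..n. if i \<le> j then c i j else 0) + (if 2 \<le> i then X else 0)"
    using i by (auto simp: sum.distrib sum.delta)
  finally have row: "(\<Sum>j=1..n. Phi n ms i j)
      = (\<Sum>j=1..n. if i \<le> j then c i j else 0) + (if 2 \<le> i then X else 0)" .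
  have X: "X = (\<Sum>i'=1..n. \<Sum>j=1..n. if i' \<le> i - 1 \<and> i \<le> j then c i' j else 0)"
    unfolding X_def c_def using size_filter_mset_index_pairs[OF Mseg_subset_index_pairs[OF ms]]
    by simp
  have diag: "(\<Sum>j=1..n. if i \<le> j then c i j else 0)
      = (\<Sum>i'=1..n. \<Sum>j=1..n. if i' = i \<and> i \<le> j then c i' j else 0)"
    using sum_row_delta[OF i, of "\<lambda>j. i \<le> j" c] by simp
  have "d i = (\<Sum>i'=1..n. \<Sum>j=1..n. if i' \<le> i \<and> i \<le> j then c i' j else 0)"
    unfolding c_def using Mseg_coverage[OF ms i] by simp
  also have "\<dots> = (\<Sum>i'=1..n. \<Sum>j=1..n.
      (if i' = i \<and> i \<le> j then c i' j else 0) + (if i' \<le> i - 1 \<and> i \<le> j then c i' j else 0))"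
    by (intro sum.cong refl) auto
  also have "\<dots> = (\<Sum>j=1..n. if i \<le> j then c i j else 0) + (if 2 \<le> i then X else 0)"
  proof -
    have "i < 2 \<Longrightarrow> (\<Sum>i'=1..n. \<Sum>j=1..n. if i' \<le> i - 1 \<and> i \<le> j then c i' j else 0) = 0"
      by (intro sum.neutral) auto
    then show ?thesis unfolding X diag by (simp add: sum.distrib)
  qed
  finally show ?thesis using row by simp
qed

lemma Phi_col_sum:
  assumes ms: "ms \<in> Mseg n d" and j: "j \<in> {1..n}"
  shows "(\<Sum>i=1..n. Phi n ms i j) = d j"
proof -
  define c where "c a b = count ms (int a, int b)" for a b
  define X where "X = size (filter_mset (\<lambda>(k, l). k \<le> int j \<and> int j < l) ms)"
  have "\<And>l. (1 + int j \<le> l) = (int j < l)"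
    by auto
  then have "(\<Sum>i=1..n. Phi n ms i j) = (\<Sum>i=1..n. (if i \<le> j then c i j else 0) + (if i = Suc j then X else 0))"
    using j by (intro sum.cong) (auto simp: Phi_def c_def X_def)
  also have "\<dots> = (\<Sum>i=1..n. if i \<le> j then c i j else 0) + (if j < n then X else 0)"
    using j by (simp add: sum.distrib sum.delta)
  finally have col: "(\<Sum>i=1..n. Phi n ms i j)
      = (\<Sum>i=1..n. if i \<le> j then c i j else 0) + (if j < n then X else 0)" .
  have X: "X = (\<Sum>i'=1..n. \<Sum>j'=1..n. if i' \<le> j \<and> j < j' then c i' j' else 0)"
    unfolding X_def c_def using size_filter_mset_index_pairs[OF Mseg_subset_index_pairs[OF ms]]
    by simp
  have diag: "(\<Sum>i=1..n. if i \<le> j then c i j else 0)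
      = (\<Sum>i'=1..n. \<Sum>j'=1..n. if j' = j \<and> i' \<le> j then c i' j' else 0)"
    using sum_col_delta[OF j, of "\<lambda>i. i \<le> j" c] by simp
  have "d j = (\<Sum>i'=1..n. \<Sum>j'=1..n. if i' \<le> j \<and> j \<le> j' then c i' j' else 0)"
    unfolding c_def using Mseg_coverage[OF ms j] by simp
  also have "\<dots> = (\<Sum>i'=1..n. \<Sum>j'=1..n.
      (if j' = j \<and> i' \<le> j then c i' j' else 0) + (if i' \<le> j \<and> j < j' then c i' j' else 0))"
    by (intro sum.cong refl) auto
  also have "\<dots> = (\<Sum>i=1..n. if i \<le> j then c i j else 0) + (if j < n then X else 0)"
  proof -
    have "\<not> j < n \<Longrightarrow> (\<Sum>i'=1..n. \<Sum>j'=1..n. if i' \<le> j \<and> j < j' then c i' j' else 0) = 0"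
      by (intro sum.neutral) auto
    then show ?thesis unfolding X diag by (simp add: sum.distrib)
  qed
  finally show ?thesis using col by simp
qed

lemma Phi_in_Mprime: "ms \<in> Mseg n d \<Longrightarrow> Phi n ms \<in> Mprime n d"
  using Phi_row_sum Phi_col_sum unfolding Mprime_def Mmat_def by (auto simp: Phi_def)

lemma inj_on_Phi: "inj_on (Phi n) (Mseg n d)"
proof (rule inj_onI)
  fix ms1 ms2 assume ms1: "ms1 \<in> Mseg n d" and ms2: "ms2 \<in> Mseg n d" and eq: "Phi n ms1 = Phi n ms2"
  show "ms1 = ms2"
  proof (rule multiset_eqI)
    fix s :: "int \<times> int"
    show "count ms1 s = count ms2 s"
    proof (cases "1 \<le> fst s \<and> fst s \<le> snd s \<and> snd s \<le> int n")
      case True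
      then have "s = (int (nat (fst s)), int (nat (snd s)))" "nat (fst s) \<in> {1..n}"
        "nat (snd s) \<in> {1..n}" "nat (fst s) \<le> nat (snd s)"
        by auto
      then show ?thesis
        using fun_cong[OF fun_cong[OF eq, of "nat (fst s)"], of "nat (snd s)"] by (simp add: Phi_def)
    next
      case False
      then show ?thesis using Mseg_count_outside[OF ms1] Mseg_count_outside[OF ms2] by simp
    qed
  qed
qed

definition segments_of :: "nat \<Rightarrow> (nat \<Rightarrow> nat \<Rightarrow> nat) \<Rightarrow> (int \<times> int) multiset" where
  "segments_of n m = Abs_multiset (\<lambda>s.
     if 1 \<le> fst s \<and> fst s \<le> snd s \<and> snd s \<le> int n then m (nat (fst s)) (nat (snd s)) else 0)"

lemma count_segments_of:
  "count (segments_of n m) s =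
     (if 1 \<le> fst s \<and> fst s \<le> snd s \<and> snd s \<le> int n then m (nat (fst s)) (nat (snd s)) else 0)"
proof -
  define f where "f s = (if 1 \<le> fst s \<and> fst s \<le> snd s \<and> snd s \<le> int n
      then m (nat (fst s)) (nat (snd s)) else 0)" for s :: "int \<times> int"
  have "finite {s. 0 < f s}"
    by (rule finite_subset[of _ "{1..int n} \<times> {1..int n}"]) (auto simp: f_def split: if_splits)
  moreover have "segments_of n m = Abs_multiset f"
    by (simp add: segments_of_def f_def[abs_def])
  ultimately show ?thesis
    by (simp add: count_Abs_multiset f_def)
qed

lemma size_filter_segments_of:
  "size (filter_mset Q (segments_of n m)) =
     (\<Sum>i=1..n. \<Sum>j=1..n. if Q (int i, int j) \<and> i \<le> j then m i j else 0)"
proof -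
  have sub: "set_mset (segments_of n m) \<subseteq> index_pairs n"
  proof
    fix s assume "s \<in># segments_of n m"
    then have h: "1 \<le> fst s \<and> fst s \<le> snd s \<and> snd s \<le> int n"
      by (auto simp: count_segments_of simp flip: count_greater_zero_iff split: if_splits)
    then have "s = (\<lambda>(i, j). (int i, int j)) (nat (fst s), nat (snd s))"
      by auto
    moreover have "(nat (fst s), nat (snd s)) \<in> {1..n} \<times> {1..n}"
      using h by auto
    ultimately show "s \<in> index_pairs n"
      unfolding index_pairs_def by blast
  qed
  show ?thesis
    unfolding size_filter_mset_index_pairs[OF sub] count_segments_of by (intro sum.cong refl) auto
qed

lemma segments_of_in_Mseg:
  assumes m: "m \<in> Mprime n d"
  shows "segments_of n m \<in> Mseg n d"
  unfolding Mseg_def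
proof (intro CollectI conjI allI ballI)
  fix s assume "s \<in># segments_of n m"
  then show "fst s \<le> snd s"
    by (auto simp: count_segments_of simp flip: count_greater_zero_iff split: if_splits)
next
  fix k :: int
  have size: "size (filter_mset (\<lambda>(a, b). a \<le> k \<and> k \<le> b) (segments_of n m)) =
      (\<Sum>i=1..n. \<Sum>j=1..n. if int i \<le> k \<and> k \<le> int j then m i j else 0)"
    unfolding size_filter_segments_of by (intro sum.cong refl) auto
  show "size (filter_mset (\<lambda>(a, b). a \<le> k \<and> k \<le> b) (segments_of n m))
      = (if 1 \<le> k \<and> k \<le> int n then d (nat k) else 0)"
  proof (cases "1 \<le> k \<and> k \<le> int n")
    case True
    define k' where "k' = nat k"
    have k': "k = int k'" "1 \<le> k'" "k' \<le> n"
      using True by (auto simp: k'_def)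
    have "(\<Sum>i=1..n. \<Sum>j=1..n. if int i \<le> k \<and> k \<le> int j then m i j else 0) = psum n m k' k'"
      unfolding psum_def k' using sum_rectangle[of k' n k' m] k' by simp
    also have "\<dots> = d k'"
      using psum_Mprime[OF m, of k' k'] k' by simp
    finally show ?thesis using size True k' by simp
  next
    case False
    then have "(\<Sum>i=1..n. \<Sum>j=1..n. if int i \<le> k \<and> k \<le> int j then m i j else 0) = 0"
      by (intro sum.neutral ballI) auto
    then show ?thesis using size False by auto
  qed
qed

lemma Phi_segments_of:
  assumes m: "m \<in> Mprime n d"
  shows "Phi n (segments_of n m) = m"
proof (intro ext)
  fix i j
  show "Phi n (segments_of n m) i j = m i j"
  proof (cases "i \<in> {1..n} \<and> j \<in> {1..n}")
    case False
    then show ?thesis using Mmat_outside[OF MprimeD[OF m]] by (auto simp: Phi_def)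
  next
    case ij: True
    consider "i \<le> j" | "j + 1 = i" | "j + 1 < i" by linarith
    then show ?thesis
    proof cases
      case 1
      then show ?thesis using ij by (simp add: Phi_def count_segments_of)
    next
      case 2
      have "size (filter_mset (\<lambda>(k, l). k \<le> int j \<and> int i \<le> l) (segments_of n m))
          = (\<Sum>i'=1..n. \<Sum>j'=1..n. if i' \<le> j \<and> i \<le> j' then m i' j' else 0)"
        unfolding size_filter_segments_of using 2 by (intro sum.cong refl) auto
      also have "\<dots> = psum n m j i"
        unfolding psum_def using sum_rectangle[of j n i m] ij by simp
      also have "\<dots> = m i j"
        using Mprime_subdiagonal_eq_psum[OF m, of "j + 1"] ij 2 by simp
      finally show ?thesis using ij 2 by (simp add: Phi_def)
    next
      case 3
      then show ?thesis using ij Mprime_below_subdiagonal[OF m 3] by (simp add: Phi_def)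
    qed
  qed
qed

lemma bij_betw_Phi: "bij_betw (Phi n) (Mseg n d) (Mprime n d)"
proof -
  have "Mprime n d \<subseteq> Phi n ` Mseg n d"
    using segments_of_in_Mseg Phi_segments_of by (metis image_eqI subsetI)
  then show ?thesis
    unfolding bij_betw_def using inj_on_Phi Phi_in_Mprime by blast
qed

section \<open>Coxeter length as the number of inversions\<close>

definition inversions :: "nat \<Rightarrow> (nat \<Rightarrow> nat) \<Rightarrow> (nat \<times> nat) set" where
  "inversions D w = {(x, y). x \<in> {1..D} \<and> y \<in> {1..D} \<and> x < y \<and> w y < w x}"

definition n_inversions :: "nat \<Rightarrow> (nat \<Rightarrow> nat) \<Rightarrow> nat" where
  "n_inversions D w = card (inversions D w)"

lemma finite_inversions [simp]: "finite (inversions D w)"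
  by (rule finite_subset[of _ "{1..D} \<times> {1..D}"]) (auto simp: inversions_def)

lemma permutes_apply_eq_iff: "w permutes S \<Longrightarrow> w x = w y \<longleftrightarrow> x = y"
  using permutes_inj inj_eq by metis

text \<open>Pairs meeting the open interval \<open>(a, b)\<close> are kept, the others are moved by the
  transposition \<open>(a b)\<close>; if \<open>u a < u b\<close>, this injects the inversions of \<open>u\<close> into those of
  \<open>u \<circ> (a b)\<close>, missing the inversion \<open>(a, b)\<close>.\<close>

definition swap_outside :: "nat \<Rightarrow> nat \<Rightarrow> nat \<times> nat \<Rightarrow> nat \<times> nat" where
  "swap_outside a b p = (if (a < fst p \<and> fst p < b) \<or> (a < snd p \<and> snd p < b) then p
     else (transpose a b (fst p), transpose a b (snd p)))"

lemma swap_outside_swap_outside: "a < b \<Longrightarrow> swap_outside a b (swap_outside a b p) = p"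
proof (cases "(a < fst p \<and> fst p < b) \<or> (a < snd p \<and> snd p < b)")
  case False
  moreover assume "a < b"
  ultimately have "\<not> ((a < transpose a b (fst p) \<and> transpose a b (fst p) < b)
      \<or> (a < transpose a b (snd p) \<and> transpose a b (snd p) < b))"
    by (auto simp: transpose_def)
  then have "swap_outside a b (transpose a b (fst p), transpose a b (snd p)) = p"
    unfolding swap_outside_def by (simp only: fst_conv snd_conv if_False) simp
  moreover have "swap_outside a b p = (transpose a b (fst p), transpose a b (snd p))"
    using False unfolding swap_outside_def by (simp only: if_False)
  ultimately show ?thesis by simp
qed (simp add: swap_outside_def)

lemma swap_outside_in_inversions:
  assumes ab: "1 \<le> a" "a < b" "b \<le> D" and lt: "u a < u b" and p: "p \<in> inversions D u"
  shows "swap_outside a b p \<in> inversions D (u \<circ> transpose a b)"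
proof -
  obtain x y where xy: "p = (x, y)" "x \<in> {1..D}" "y \<in> {1..D}" "x < y" "u y < u x"
    using p by (auto simp: inversions_def)
  show ?thesis
  proof (cases "(a < x \<and> x < b) \<or> (a < y \<and> y < b)")
    case True
    have "(u \<circ> transpose a b) z = (if z = a then u b else if z = b then u a else u z)" for z
      by (simp add: transpose_def)
    then have "(u \<circ> transpose a b) y < (u \<circ> transpose a b) x" using True xy lt ab by auto
    then show ?thesis using True xy by (simp add: swap_outside_def inversions_def)
  next
    case False
    have "\<not> (x = a \<and> y = b)" using xy lt by auto
    then have "transpose a b x < transpose a b y" "transpose a b x \<in> {1..D}" "transpose a b y \<in> {1..D}"
      using False xy ab by (auto simp: transpose_def)
    moreover have "swap_outside a b p = (transpose a b x, transpose a b y)"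
      using False unfolding swap_outside_def xy(1) by (simp only: fst_conv snd_conv if_False)
    ultimately show ?thesis using xy by (simp add: inversions_def)
  qed
qed

lemma n_inversions_swap_less:
  assumes u: "u permutes {1..D}" and ab: "1 \<le> a" "a < b" "b \<le> D" and lt: "u a < u b"
  shows "n_inversions D u < n_inversions D (u \<circ> transpose a b)"
proof -
  let ?G = "swap_outside a b"
  have "(a, b) \<notin> ?G ` inversions D u"
  proof
    assume "(a, b) \<in> ?G ` inversions D u"
    then have "?G (a, b) \<in> inversions D u" using swap_outside_swap_outside[OF ab(2)] by force
    moreover have "?G (a, b) = (b, a)" using ab by (simp add: swap_outside_def)
    ultimately show False using ab by (auto simp: inversions_def)
  qed
  moreover have "(a, b) \<in> inversions D (u \<circ> transpose a b)" using ab lt by (simp add: inversions_def)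
  ultimately have "?G ` inversions D u \<subset> inversions D (u \<circ> transpose a b)"
    using swap_outside_in_inversions[OF ab lt] by blast
  then have "card (?G ` inversions D u) < n_inversions D (u \<circ> transpose a b)"
    by (simp add: n_inversions_def psubset_card_mono)
  moreover have "inj_on ?G (inversions D u)" by (metis swap_outside_swap_outside[OF ab(2)] inj_onI)
  ultimately show ?thesis by (simp add: n_inversions_def card_image)
qed

lemma permutes_ascending_eq_id:
  assumes w: "w permutes {1..D}" and asc: "\<And>i. 1 \<le> i \<Longrightarrow> i < D \<Longrightarrow> w i < w (Suc i)"
  shows "w = id"
proof
  fix x
  show "w x = id x"
  proof (cases "x \<in> {1..D}")
    case x: True
    have lower: "k \<le> w k" if "1 \<le> k" "k \<le> D" for k
      using that
    proof (induction k)
      case (Suc k)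
      then show ?case
        using permutes_in_image[OF w, of 1] asc[of k] by (cases "k = 0") fastforce+
    qed simp
    have upper: "w k \<le> k" if "1 \<le> k" "k \<le> D" for k
      using that
    proof (induction "D - k" arbitrary: k)
      case 0
      then show ?case using permutes_in_image[OF w, of k] by auto
    next
      case (Suc m)
      then show ?case using Suc.hyps(1)[of "Suc k"] asc[of k] by fastforce
    qed
    have "x \<le> w x" "w x \<le> x" using x lower upper by auto
    then show ?thesis by simp
  next
    case False
    then show ?thesis using w by (simp add: permutes_not_in)
  qed
qed

lemma inversions_adjacent_swap:
  assumes f: "f permutes {1..D}" and i: "1 \<le> i" "i < D"
  defines "p \<equiv> (min (inv f i) (inv f (Suc i)), max (inv f i) (inv f (Suc i)))"
  shows "inversions D (transpose i (Suc i) \<circ> f) - {p} = inversions D f - {p}"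
proof -
  have "(transpose i (Suc i) (f y) < transpose i (Suc i) (f x)) = (f y < f x)"
    if "x < y" "(x, y) \<noteq> p" for x y
  proof -
    have "f x \<noteq> f y" using that permutes_apply_eq_iff[OF f] by auto
    moreover have "{f x, f y} \<noteq> {i, Suc i}"
    proof
      assume "{f x, f y} = {i, Suc i}"
      then have "(f x = i \<and> f y = Suc i) \<or> (f x = Suc i \<and> f y = i)" by (auto simp: doubleton_eq_iff)
      then have "(x = inv f i \<and> y = inv f (Suc i)) \<or> (x = inv f (Suc i) \<and> y = inv f i)"
        using permutes_inverses(2)[OF f] by metis
      then show False using that by (auto simp: p_def)
    qed
    ultimately show ?thesis by (auto simp: transpose_def doubleton_eq_iff)
  qed
  then show ?thesis by (auto simp: inversions_def)
qed

lemma n_inversions_adjacent_swap_le: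
  assumes f: "f permutes {1..D}" and i: "1 \<le> i" "i < D"
  shows "n_inversions D (transpose i (Suc i) \<circ> f) \<le> Suc (n_inversions D f)"
proof -
  let ?p = "(min (inv f i) (inv f (Suc i)), max (inv f i) (inv f (Suc i)))"
  have "inversions D (transpose i (Suc i) \<circ> f) \<subseteq> insert ?p (inversions D f)"
    using inversions_adjacent_swap[OF f i] by blast
  then have "n_inversions D (transpose i (Suc i) \<circ> f) \<le> card (insert ?p (inversions D f))"
    unfolding n_inversions_def by (intro card_mono) auto
  then show ?thesis by (simp add: n_inversions_def card_insert_if split: if_splits)
qed

lemma n_inversions_adjacent_swap_descent:
  assumes f: "f permutes {1..D}" and i: "1 \<le> i" "i < D" and desc: "inv f (Suc i) < inv f i"
  shows "Suc (n_inversions D (transpose i (Suc i) \<circ> f)) = n_inversions D f"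
proof -
  define a b where "a = inv f i" and "b = inv f (Suc i)"
  have ab: "a \<in> {1..D}" "b \<in> {1..D}" "f a = i" "f b = Suc i"
    using i permutes_in_image[OF permutes_inv[OF f]] permutes_inverses(1)[OF f] by (auto simp: a_def b_def)
  have "(b, a) \<in> inversions D f" "(b, a) \<notin> inversions D (transpose i (Suc i) \<circ> f)"
    using ab desc by (auto simp: inversions_def a_def b_def)
  moreover have "inversions D (transpose i (Suc i) \<circ> f) - {(b, a)} = inversions D f - {(b, a)}"
    using inversions_adjacent_swap[OF f i] desc by (simp add: a_def b_def)
  ultimately have "inversions D (transpose i (Suc i) \<circ> f) = inversions D f - {(b, a)}"
    by blast
  moreover have "card (inversions D f) > 0"
    using \<open>(b, a) \<in> inversions D f\<close> card_gt_0_iff by fastforce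
  ultimately show ?thesis using \<open>(b, a) \<in> inversions D f\<close> by (simp add: n_inversions_def)
qed

abbreviation transposition_word :: "nat list \<Rightarrow> nat \<Rightarrow> nat" where
  "transposition_word ts \<equiv> foldr (\<lambda>i f. transpose i (Suc i) \<circ> f) ts id"

lemma transposition_word_permutes:
  "set ts \<subseteq> {1..<D} \<Longrightarrow> transposition_word ts permutes {1..D}"
  by (induction ts) (auto intro!: permutes_compose permutes_swap_id permutes_id)

lemma n_inversions_transposition_word_le:
  "set ts \<subseteq> {1..<D} \<Longrightarrow> n_inversions D (transposition_word ts) \<le> length ts"
proof (induction ts)
  case Nil
  have "inversions D id = {}" by (auto simp: inversions_def)
  then show ?case by (simp add: n_inversions_def id_def)
next
  case (Cons i ts)
  then have ts: "set ts \<subseteq> {1..<D}" and i: "1 \<le> i" "i < D" by auto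
  have "transposition_word (i # ts) = transpose i (Suc i) \<circ> transposition_word ts"
    by (simp only: foldr.simps o_apply)
  then have "n_inversions D (transposition_word (i # ts)) \<le> Suc (n_inversions D (transposition_word ts))"
    using n_inversions_adjacent_swap_le[OF transposition_word_permutes[OF ts] i] by simp
  then show ?case using Cons.IH[OF ts] by (simp only: length_Cons)
qed

lemma transposition_word_reduced:
  assumes "w permutes {1..D}"
  shows "\<exists>ts. length ts = n_inversions D w \<and> set ts \<subseteq> {1..<D} \<and> w = transposition_word ts"
  using assms
proof (induction "n_inversions D w" arbitrary: w rule: less_induct)
  case less
  note w = less.prems
  show ?case
  proof (cases "w = id")
    case True
    have "inversions D id = {}" by (auto simp: inversions_def)
    then show ?thesis using True by (intro exI[of _ "[]"]) (simp add: n_inversions_def)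
  next
    case False
    then have "inv w \<noteq> id" using w by (metis inv_id permutes_inv_inv)
    then obtain i where i: "1 \<le> i" "i < D" "\<not> inv w i < inv w (Suc i)"
      using permutes_ascending_eq_id[OF permutes_inv[OF w]] by blast
    have "inv w i \<noteq> inv w (Suc i)"
      using permutes_apply_eq_iff[OF permutes_inv[OF w]] by simp
    then have desc: "inv w (Suc i) < inv w i" using i by simp
    define h where "h = transpose i (Suc i) \<circ> w"
    have h: "h permutes {1..D}"
      unfolding h_def using w i by (intro permutes_compose permutes_swap_id) auto
    have n: "Suc (n_inversions D h) = n_inversions D w"
      unfolding h_def by (rule n_inversions_adjacent_swap_descent[OF w i(1,2) desc])
    obtain ts where ts: "length ts = n_inversions D h" "set ts \<subseteq> {1..<D}" "h = transposition_word ts"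
      using less.hyps[OF _ h] n by auto
    have "w = transpose i (Suc i) \<circ> h" by (simp add: h_def comp_assoc[symmetric])
    then show ?thesis using ts n i by (intro exI[of _ "i # ts"]) auto
  qed
qed

lemma coxlen_eq_n_inversions:
  assumes w: "w permutes {1..D}"
  shows "coxlen D w = n_inversions D w"
  unfolding coxlen_def
proof (rule Least_equality)
  show "\<exists>ts. length ts = n_inversions D w \<and> set ts \<subseteq> {1..<D} \<and> w = transposition_word ts"
    by (rule transposition_word_reduced[OF w])
next
  fix k assume "\<exists>ts. length ts = k \<and> set ts \<subseteq> {1..<D} \<and> w = transposition_word ts"
  then show "n_inversions D w \<le> k" using n_inversions_transposition_word_le by blast
qed

section \<open>The rank criterion for the Bruhat order\<close>

definition rank :: "(nat \<Rightarrow> nat) \<Rightarrow> nat \<Rightarrow> nat \<Rightarrow> nat" where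
  "rank w x t = card {y \<in> {1..x}. t \<le> w y}"

definition rank_le :: "nat \<Rightarrow> (nat \<Rightarrow> nat) \<Rightarrow> (nat \<Rightarrow> nat) \<Rightarrow> bool" where
  "rank_le D u v \<longleftrightarrow> (\<forall>x\<le>D. \<forall>t\<in>{1..D}. rank u x t \<le> rank v x t)"

lemma rank_Suc: "rank w (Suc x) t = rank w x t + (if t \<le> w (Suc x) then 1 else 0)"
proof -
  have "{y \<in> {1..Suc x}. t \<le> w y} = {y \<in> {1..x}. t \<le> w y} \<union> (if t \<le> w (Suc x) then {Suc x} else {})"
    by (auto simp: le_Suc_eq)
  then show ?thesis by (auto simp: rank_def)
qed

lemma rank_add: "rank w (x + p) t = rank w x t + card {z \<in> {x + 1..x + p}. t \<le> w z}"
proof -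
  have "{y \<in> {1..x + p}. t \<le> w y} = {y \<in> {1..x}. t \<le> w y} \<union> {z \<in> {x + 1..x + p}. t \<le> w z}"
    by auto
  then show ?thesis unfolding rank_def by (subst card_Un_disjoint[symmetric]) auto
qed

lemma rank_split:
  assumes "t1 \<le> t2"
  shows "rank w x t1 = rank w x t2 + card {y \<in> {1..x}. t1 \<le> w y \<and> w y < t2}"
proof -
  have "{y \<in> {1..x}. t1 \<le> w y} = {y \<in> {1..x}. t2 \<le> w y} \<union> {y \<in> {1..x}. t1 \<le> w y \<and> w y < t2}"
    using assms by auto
  then show ?thesis unfolding rank_def by (subst card_Un_disjoint[symmetric]) auto
qed

lemma rank_cong: "(\<And>y. y \<in> {1..x} \<Longrightarrow> u y = v y) \<Longrightarrow> rank u x t = rank v x t"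
  unfolding rank_def by (intro arg_cong[where f = card]) auto

lemma rank_swap_before: "x < a \<Longrightarrow> a < b \<Longrightarrow> rank (u \<circ> transpose a b) x t = rank u x t"
  by (intro rank_cong) (auto simp: transpose_def)

lemma rank_swap_after:
  assumes "1 \<le> a" "a < b" "b \<le> x"
  shows "rank (u \<circ> transpose a b) x t = rank u x t"
proof -
  let ?\<tau> = "transpose a b"
  have "{y \<in> {1..x}. t \<le> u (?\<tau> y)} = ?\<tau> ` {y \<in> {1..x}. t \<le> u y}"
  proof
    show "{y \<in> {1..x}. t \<le> u (?\<tau> y)} \<subseteq> ?\<tau> ` {y \<in> {1..x}. t \<le> u y}"
    proof
      fix y assume y: "y \<in> {y \<in> {1..x}. t \<le> u (?\<tau> y)}"
      have "?\<tau> y \<in> {y \<in> {1..x}. t \<le> u y}" using y assms by (auto simp: transpose_def)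
      moreover have "y = ?\<tau> (?\<tau> y)" by simp
      ultimately show "y \<in> ?\<tau> ` {y \<in> {1..x}. t \<le> u y}" by blast
    qed
    show "?\<tau> ` {y \<in> {1..x}. t \<le> u y} \<subseteq> {y \<in> {1..x}. t \<le> u (?\<tau> y)}"
      using assms by (auto simp: transpose_def)
  qed
  moreover have "inj_on ?\<tau> {y \<in> {1..x}. t \<le> u y}"
    by (meson inj_on_subset inj_transpose subset_UNIV)
  ultimately show ?thesis unfolding rank_def by (simp add: card_image)
qed

lemma rank_swap_between:
  assumes "1 \<le> a" "a \<le> x" "x < b"
  shows "rank (u \<circ> transpose a b) x t + (if t \<le> u a then 1 else 0)
       = rank u x t + (if t \<le> u b then 1 else 0)"
proof -
  let ?S = "{y \<in> {1..x}. y \<noteq> a \<and> t \<le> u y}"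
  have "{y \<in> {1..x}. t \<le> (u \<circ> transpose a b) y} = ?S \<union> (if t \<le> u b then {a} else {})"
    "{y \<in> {1..x}. t \<le> u y} = ?S \<union> (if t \<le> u a then {a} else {})"
    using assms by (auto simp: transpose_def)
  then show ?thesis unfolding rank_def by (auto simp: card_insert_if)
qed

lemma rank_swap_mono:
  assumes ab: "1 \<le> a" "a < b" and lt: "u a < u b"
  shows "rank u x t \<le> rank (u \<circ> transpose a b) x t"
proof -
  consider "x < a" | "b \<le> x" | "a \<le> x" "x < b" by linarith
  then show ?thesis
  proof cases
    case 1
    then show ?thesis using rank_swap_before[OF _ ab(2)] by simp
  next
    case 2
    then show ?thesis using rank_swap_after[OF ab] by simp
  next
    case 3
    then show ?thesis using rank_swap_between[OF ab(1) 3, of u t] lt by (auto split: if_splits)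
  qed
qed

lemma bruhat_step_rank_mono:
  assumes "bruhat_step D u w"
  shows "w permutes {1..D} \<and> rank u x t \<le> rank w x t"
proof -
  obtain a b where u: "u permutes {1..D}" and ab: "a \<in> {1..D}" "b \<in> {1..D}" "a \<noteq> b"
    and w: "w = u \<circ> transpose a b" and longer: "coxlen D u < coxlen D w"
    using assms unfolding bruhat_step_def by blast
  have wp: "w permutes {1..D}"
    unfolding w using u ab by (intro permutes_compose permutes_swap_id) auto
  define a' b' where "a' = min a b" and "b' = max a b"
  have ab': "1 \<le> a'" "a' < b'" "b' \<le> D" and w': "w = u \<circ> transpose a' b'"
    using ab w by (auto simp: a'_def b'_def min_def max_def transpose_commute)
  have "u a' < u b'"
  proof (rule ccontr)
    assume "\<not> u a' < u b'"
    then have "w a' < w b'"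
      using permutes_apply_eq_iff[OF u, of a' b'] ab' unfolding w' by auto
    then have "n_inversions D w < n_inversions D (w \<circ> transpose a' b')"
      using n_inversions_swap_less[OF wp ab'] by simp
    moreover have "w \<circ> transpose a' b' = u" unfolding w' by (simp add: comp_assoc)
    ultimately show False
      using longer coxlen_eq_n_inversions[OF u] coxlen_eq_n_inversions[OF wp] by simp
  qed
  then show ?thesis using rank_swap_mono[OF ab'(1,2)] wp w' by simp
qed

lemma bruhat_le_rank_mono:
  assumes "bruhat_le D u w" "u permutes {1..D}"
  shows "w permutes {1..D} \<and> (\<forall>x t. rank u x t \<le> rank w x t)"
  using assms(1) unfolding bruhat_le_def
proof (induction rule: rtranclp_induct)
  case base
  then show ?case using assms(2) by simp
next
  case (step y z)
  then show ?case using bruhat_step_rank_mono[OF step(2)] le_trans by blast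
qed

lemma rank_le_first_difference:
  assumes le: "rank_le D u v" and u: "u permutes {1..D}" and v: "v permutes {1..D}"
    and ne: "u a \<noteq> v a" and agree: "\<And>y. y < a \<Longrightarrow> u y = v y"
  shows "u a < v a"
proof (rule ccontr)
  assume "\<not> u a < v a"
  then have lt: "v a < u a" using ne by simp
  have a: "a \<in> {1..D}" using ne u v by (metis permutes_not_in)
  moreover have "rank u (a - 1) (u a) = rank v (a - 1) (u a)"
    using agree by (intro rank_cong) auto
  ultimately have "rank v a (u a) < rank u a (u a)"
    using rank_Suc[of v "a - 1" "u a"] rank_Suc[of u "a - 1" "u a"] lt by auto
  moreover have "rank u a (u a) \<le> rank v a (u a)"
    using le a permutes_in_image[OF u, of a] unfolding rank_le_def by auto
  ultimately show False by simp
qed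

text \<open>Count the positions up to \<open>x\<close> with values in \<open>[u a, t)\<close>: below \<open>a\<close> the two permutations
  agree, by the gap hypothesis \<open>v\<close> has no further such position, and \<open>u\<close> has the position \<open>a\<close>.\<close>

lemma rank_less_at_gap:
  assumes a: "1 \<le> a" "a \<le> x" "x < b"
    and agree: "\<And>y. y < a \<Longrightarrow> u y = v y"
    and t: "u a < t" "t \<le> v a"
    and gap: "\<And>y. a < y \<Longrightarrow> y < b \<Longrightarrow> \<not> (u a \<le> v y \<and> v y < v a)"
    and le: "rank u x (u a) \<le> rank v x (u a)"
  shows "rank u x t < rank v x t"
proof -
  define K where "K = {y \<in> {1..a - 1}. u a \<le> u y \<and> u y < t}"
  have "{y \<in> {1..x}. u a \<le> v y \<and> v y < t} = K"
  proof (intro set_eqI iffI)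
    fix y assume y: "y \<in> {y \<in> {1..x}. u a \<le> v y \<and> v y < t}"
    then have "y < a" using gap[of y] a t by (cases y a rule: linorder_cases) auto
    then show "y \<in> K" using y agree by (auto simp: K_def)
  qed (use a agree in \<open>auto simp: K_def\<close>)
  then have v_side: "rank v x (u a) = rank v x t + card K"
    using rank_split[of "u a" t v x] t by simp
  have "insert a K \<subseteq> {y \<in> {1..x}. u a \<le> u y \<and> u y < t}"
    using a t by (auto simp: K_def)
  then have "card K + 1 \<le> card {y \<in> {1..x}. u a \<le> u y \<and> u y < t}"
    using card_mono[of _ "insert a K"] by (fastforce simp: K_def)
  then have "rank u x (u a) \<ge> rank u x t + card K + 1"
    using rank_split[of "u a" t u x] t by simp
  then show ?thesis using le v_side by simp
qed

lemma rank_le_swap_descent: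
  assumes le: "rank_le D u v" and u: "u permutes {1..D}"
    and ab: "1 \<le> a" "a < b" "b \<le> D" "u a \<le> v b" "v b < v a"
    and agree: "\<And>y. y < a \<Longrightarrow> u y = v y"
    and gap: "\<And>y. a < y \<Longrightarrow> y < b \<Longrightarrow> \<not> (u a \<le> v y \<and> v y < v a)"
  shows "rank_le D u (v \<circ> transpose a b)"
  unfolding rank_le_def
proof (intro allI impI ballI)
  fix x t assume x: "x \<le> D" and t: "t \<in> {1..D}"
  have base: "rank u x t \<le> rank v x t" using le x t by (simp add: rank_le_def)
  consider "x < a" | "b \<le> x" | "a \<le> x" "x < b" by linarith
  then show "rank u x t \<le> rank (v \<circ> transpose a b) x t"
  proof cases
    case 3
    have swap: "rank (v \<circ> transpose a b) x t + (if t \<le> v a then 1 else 0)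
        = rank v x t + (if t \<le> v b then 1 else 0)"
      using rank_swap_between[OF ab(1) 3] by simp
    show ?thesis
    proof (cases "v b < t \<and> t \<le> v a")
      case True
      moreover have "rank u x (u a) \<le> rank v x (u a)"
        using le x permutes_in_image[OF u] ab unfolding rank_le_def by auto
      ultimately have "rank u x t < rank v x t"
        by (intro rank_less_at_gap[of a x b u v t] agree gap) (use ab 3 in auto)
      then show ?thesis using swap True by simp
    qed (use swap base ab in auto)
  qed (use base ab rank_swap_before rank_swap_after in auto)
qed

lemma rank_le_descent:
  assumes u: "u permutes {1..D}" and v: "v permutes {1..D}" and ne: "u \<noteq> v" and le: "rank_le D u v"
  shows "\<exists>a b. 1 \<le> a \<and> a < b \<and> b \<le> D \<and> v b < v a \<and> rank_le D u (v \<circ> transpose a b)"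
proof -
  define a where "a = (LEAST x. u x \<noteq> v x)"
  have "\<exists>x. u x \<noteq> v x" using ne by auto
  then have ne_a: "u a \<noteq> v a" unfolding a_def by (rule LeastI_ex)
  have agree: "u y = v y" if "y < a" for y using that not_less_Least unfolding a_def by blast
  have a: "a \<in> {1..D}" using ne_a u v by (metis permutes_not_in)
  have lt: "u a < v a" by (rule rank_le_first_difference[OF le u v ne_a agree])
  define C where "C = {y. a < y \<and> y \<le> D \<and> u a \<le> v y \<and> v y < v a}"
  have "inv v (u a) \<in> C"
  proof -
    define y where "y = inv v (u a)"
    have vy: "v y = u a" using permutes_inverses(1)[OF v] by (simp add: y_def)
    have "y \<in> {1..D}"
      using a permutes_in_image[OF u] permutes_in_image[OF permutes_inv[OF v]] by (auto simp: y_def)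
    moreover have "a < y"
    proof (rule ccontr)
      assume "\<not> a < y"
      then have "u y = u a" using agree vy ne_a by (cases "y = a") auto
      then show False using \<open>\<not> a < y\<close> vy ne_a permutes_apply_eq_iff[OF u] by auto
    qed
    ultimately show ?thesis using lt vy by (auto simp: C_def y_def)
  qed
  define b where "b = (LEAST y. y \<in> C)"
  have "b \<in> C" unfolding b_def by (rule LeastI) fact
  then have ab: "a < b" "b \<le> D" "u a \<le> v b" "v b < v a" by (auto simp: C_def)
  have gap: "\<not> (u a \<le> v y \<and> v y < v a)" if "a < y" "y < b" for y
    using that ab not_less_Least[of y "\<lambda>y. y \<in> C"] by (auto simp: C_def b_def)
  have "rank_le D u (v \<circ> transpose a b)"
    using a ab by (intro rank_le_swap_descent[OF le u] agree gap) auto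
  then show ?thesis using a ab by (intro exI[of _ a] exI[of _ b]) auto
qed

lemma rank_le_imp_bruhat_le:
  assumes u: "u permutes {1..D}"
  shows "v permutes {1..D} \<Longrightarrow> rank_le D u v \<Longrightarrow> bruhat_le D u v"
proof (induction "n_inversions D v" arbitrary: v rule: less_induct)
  case less
  note v = less.prems(1) and le = less.prems(2)
  show ?case
  proof (cases "u = v")
    case True
    then show ?thesis by (simp add: bruhat_le_def)
  next
    case False
    obtain a b where ab: "1 \<le> a" "a < b" "b \<le> D" "v b < v a"
      and le': "rank_le D u (v \<circ> transpose a b)"
      using rank_le_descent[OF u v False le] by blast
    define v' where "v' = v \<circ> transpose a b"
    have v': "v' permutes {1..D}"
      unfolding v'_def using v ab by (intro permutes_compose permutes_swap_id) auto
    have vv': "v = v' \<circ> transpose a b" unfolding v'_def by (simp add: comp_assoc)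
    have "v' a < v' b" unfolding v'_def using ab by simp
    then have fewer: "n_inversions D v' < n_inversions D v"
      using n_inversions_swap_less[OF v' ab(1-3)] vv' by simp
    have "bruhat_le D u v'"
      using less.hyps[OF fewer v'] le' by (simp add: v'_def)
    moreover have "bruhat_step D v' v"
      unfolding bruhat_step_def
      using v' ab vv' fewer coxlen_eq_n_inversions[OF v'] coxlen_eq_n_inversions[OF v]
      by (intro conjI bexI[of _ a] bexI[of _ b]) auto
    ultimately show ?thesis unfolding bruhat_le_def by (metis rtranclp.rtrancl_into_rtrancl)
  qed
qed

section \<open>Blocks and double cosets\<close>

definition block_end :: "(nat \<Rightarrow> nat) \<Rightarrow> nat \<Rightarrow> nat" where
  "block_end d k = (\<Sum>k'=1..k. d k')"

lemma block_end_0 [simp]: "block_end d 0 = 0"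
  by (simp add: block_end_def)

lemma block_end_Suc: "block_end d (Suc k) = block_end d k + d (Suc k)"
  by (simp add: block_end_def)

lemma block_end_mono: "k \<le> k' \<Longrightarrow> block_end d k \<le> block_end d k'"
  unfolding block_end_def by (rule sum_mono2) auto

lemma dtot_eq_block_end: "dtot n d = block_end d n"
  by (simp add: dtot_def block_end_def)

lemma finite_block [simp]: "finite (block d i)"
  by (simp add: block_def)

lemma block_eq: "1 \<le> i \<Longrightarrow> block d i = {block_end d (i - 1) + 1..block_end d i}"
proof -
  assume "1 \<le> i"
  then have "(\<Sum>k=1..<i. d k) = block_end d (i - 1)"
    unfolding block_end_def by (intro sum.cong) auto
  then show ?thesis by (simp add: block_def block_end_def)
qed

lemma block_Suc: "block d (Suc k) = {block_end d k + 1..block_end d (Suc k)}"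
  using block_eq[of "Suc k" d] by simp

lemma card_block: "1 \<le> i \<Longrightarrow> card (block d i) = d i"
  by (cases i) (auto simp: block_Suc block_end_Suc)

lemma block_disjoint: "1 \<le> i \<Longrightarrow> 1 \<le> j \<Longrightarrow> i \<noteq> j \<Longrightarrow> block d i \<inter> block d j = {}"
proof -
  have "block d i \<inter> block d j = {}" if "1 \<le> i" "i < j" for i j
  proof -
    have "block_end d i \<le> block_end d (j - 1)" using that by (intro block_end_mono) auto
    then show ?thesis using that by (auto simp: block_eq)
  qed
  then show "1 \<le> i \<Longrightarrow> 1 \<le> j \<Longrightarrow> i \<noteq> j \<Longrightarrow> block d i \<inter> block d j = {}"
    by (metis inf_commute linorder_neqE_nat)
qed

lemma disjoint_family_on_block: "disjoint_family_on (block d) {1..n}"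
  unfolding disjoint_family_on_def using block_disjoint by auto

lemma block_subset: "1 \<le> i \<Longrightarrow> i \<le> n \<Longrightarrow> block d i \<subseteq> {1..block_end d n}"
  using block_end_mono[of i n d] by (auto simp: block_eq)

lemma UN_block: "(\<Union>i\<in>{1..k}. block d i) = {1..block_end d k}"
proof (induction k)
  case (Suc k)
  have "{1..Suc k} = insert (Suc k) {1..k}" by auto
  then show ?case using Suc by (auto simp: block_Suc block_end_Suc)
qed simp

lemma rank_block_end: "rank w (block_end d k) t = (\<Sum>i=1..k. card {y \<in> block d i. t \<le> w y})"
proof (induction k)
  case (Suc k)
  have "{y \<in> {1..block_end d (Suc k)}. t \<le> w y}
      = {y \<in> {1..block_end d k}. t \<le> w y} \<union> {y \<in> block d (Suc k). t \<le> w y}"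
    by (auto simp: block_Suc block_end_Suc)
  then have "rank w (block_end d (Suc k)) t = rank w (block_end d k) t + card {y \<in> block d (Suc k). t \<le> w y}"
    unfolding rank_def by (subst card_Un_disjoint[symmetric]) (auto simp: block_Suc)
  then show ?case using Suc by simp
qed (simp add: rank_def)

lemma card_above_block_end:
  assumes range: "\<forall>y\<in>B. w y \<in> {1..block_end d n}" and fin: "finite B" and j: "j \<le> n"
  shows "card {y\<in>B. block_end d j < w y} = (\<Sum>j'=Suc j..n. card {y\<in>B. w y \<in> block d j'})"
  using j
proof (induction "n - j" arbitrary: j)
  case 0
  then have "{y\<in>B. block_end d j < w y} = {}" using range by auto
  then show ?case using 0 by (simp only:) simp
next
  case (Suc k)
  have "{y\<in>B. block_end d j < w y} = {y\<in>B. block_end d (Suc j) < w y} \<union> {y\<in>B. w y \<in> block d (Suc j)}"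
    by (auto simp: block_Suc block_end_Suc)
  then have "card {y\<in>B. block_end d j < w y}
      = card {y\<in>B. block_end d (Suc j) < w y} + card {y\<in>B. w y \<in> block d (Suc j)}"
    using fin by (subst card_Un_disjoint[symmetric]) (auto simp: block_Suc)
  then show ?case using Suc by (simp add: sum.atLeast_Suc_atMost)
qed

lemma psi_eq_card:
  assumes w: "w permutes {1..dtot n d}" and ij: "i \<in> {1..n}" "j \<in> {1..n}"
  shows "psi n d w i j = card {y \<in> block d i. w y \<in> block d j}"
proof -
  have "w ` {y \<in> block d i. w y \<in> block d j} = w ` block d i \<inter> block d j" by auto
  moreover have "inj_on w {y \<in> block d i. w y \<in> block d j}"
    using permutes_inj[OF w] by (auto simp: inj_on_def inj_def)
  ultimately show ?thesis using ij by (simp add: psi_def card_image[symmetric])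
qed

lemma rank_block_corner:
  assumes w: "w permutes {1..dtot n d}" and k: "k \<le> n" and j: "j \<in> {1..n}"
  shows "rank w (block_end d k) (Suc (block_end d (j - 1))) = psum n (psi n d w) k j"
proof -
  have "rank w (block_end d k) (Suc (block_end d (j - 1)))
      = (\<Sum>i=1..k. card {y \<in> block d i. block_end d (j - 1) < w y})"
    unfolding rank_block_end by (simp add: Suc_le_eq)
  also have "\<dots> = (\<Sum>i=1..k. \<Sum>j'=j..n. card {y \<in> block d i. w y \<in> block d j'})"
  proof (intro sum.cong refl)
    fix i assume i: "i \<in> {1..k}"
    have range: "\<forall>y\<in>block d i. w y \<in> {1..block_end d n}"
      using block_subset[of i n d] i k permutes_in_image[OF w] by (auto simp: dtot_eq_block_end)
    show "card {y \<in> block d i. block_end d (j - 1) < w y}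
        = (\<Sum>j'=j..n. card {y \<in> block d i. w y \<in> block d j'})"
      using card_above_block_end[OF range finite_block, of "j - 1"] j by auto
  qed
  also have "\<dots> = psum n (psi n d w) k j"
    unfolding psum_def using k j by (intro sum.cong refl) (auto simp: psi_eq_card[OF w])
  finally show ?thesis .
qed

lemma rank_block_corner_cases:
  assumes w: "w permutes {1..block_end d n}" and k: "k \<le> n" and j: "j \<le> n"
  shows "rank w (block_end d k) (Suc (block_end d j))
       = (if j < n then psum n (psi n d w) k (Suc j) else 0)"
proof (cases "j < n")
  case True
  then show ?thesis using rank_block_corner[of w n d k "Suc j"] w k by (simp add: dtot_eq_block_end)
next
  case False
  have "w y \<le> block_end d n" if "y \<in> {1..block_end d k}" for y
    using that block_end_mono[OF k, of d] permutes_in_image[OF w, of y] by auto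
  then have "{y \<in> {1..block_end d k}. Suc (block_end d j) \<le> w y} = {}"
    using False j by fastforce
  then show ?thesis using False by (simp add: rank_def)
qed

lemma bij_betw_disjoint_family:
  assumes card: "\<And>i. i \<in> I \<Longrightarrow> card (P i) = card (Q i)"
    and finP: "\<And>i. i \<in> I \<Longrightarrow> finite (P i)" and finQ: "\<And>i. i \<in> I \<Longrightarrow> finite (Q i)"
    and dP: "disjoint_family_on P I" and dQ: "disjoint_family_on Q I"
  shows "\<exists>h. bij_betw h (\<Union>i\<in>I. P i) (\<Union>i\<in>I. Q i) \<and> (\<forall>i\<in>I. bij_betw h (P i) (Q i))"
proof -
  define H where "H i = (SOME h. bij_betw h (P i) (Q i))" for i
  have H: "bij_betw (H i) (P i) (Q i)" if "i \<in> I" for i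
  proof -
    have "\<exists>h. bij_betw h (P i) (Q i)"
      using finite_same_card_bij[OF finP[OF that] finQ[OF that] card[OF that]] .
    then show ?thesis unfolding H_def by (rule someI_ex)
  qed
  define h where "h x = H (SOME i. i \<in> I \<and> x \<in> P i) x" for x
  have h: "bij_betw h (P i) (Q i)" if i: "i \<in> I" for i
  proof -
    have "h x = H i x" if x: "x \<in> P i" for x
    proof -
      have "(SOME i. i \<in> I \<and> x \<in> P i) = i"
      proof (rule some_equality)
        fix j assume "j \<in> I \<and> x \<in> P j"
        then show "j = i" using dP i x unfolding disjoint_family_on_def by blast
      qed (use i x in simp)
      then show ?thesis by (simp add: h_def)
    qed
    then have "bij_betw h (P i) (Q i) = bij_betw (H i) (P i) (Q i)" by (rule bij_betw_cong)
    then show ?thesis using H[OF i] by simp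
  qed
  then have "bij_betw h (\<Union>i\<in>I. P i) (\<Union>i\<in>I. Q i)" by (rule bij_betw_UNION_disjoint[OF dQ])
  then show ?thesis using h by blast
qed

lemma bij_betw_onto_blocks:
  assumes T: "finite T" "\<kappa> ` T \<subseteq> {1..n}" and card: "\<And>i. i \<in> {1..n} \<Longrightarrow> card {p \<in> T. \<kappa> p = i} = d i"
  shows "\<exists>f. bij_betw f T {1..block_end d n} \<and> (\<forall>i\<in>{1..n}. f ` {p \<in> T. \<kappa> p = i} = block d i)"
proof -
  define F where "F i = {p \<in> T. \<kappa> p = i}" for i
  obtain f where f: "bij_betw f (\<Union>i\<in>{1..n}. F i) (\<Union>i\<in>{1..n}. block d i)"
    "\<forall>i\<in>{1..n}. bij_betw f (F i) (block d i)"
  proof -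
    have "\<exists>f. bij_betw f (\<Union>i\<in>{1..n}. F i) (\<Union>i\<in>{1..n}. block d i)
        \<and> (\<forall>i\<in>{1..n}. bij_betw f (F i) (block d i))"
    proof (rule bij_betw_disjoint_family)
      show "disjoint_family_on F {1..n}" by (auto simp: F_def disjoint_family_on_def)
    qed (use card card_block disjoint_family_on_block T(1) in \<open>auto simp: F_def\<close>)
    then show ?thesis using that by blast
  qed
  moreover have "(\<Union>i\<in>{1..n}. F i) = T" using T(2) by (auto simp: F_def)
  ultimately show ?thesis unfolding UN_block bij_betw_def F_def by auto
qed

lemma permutation_from_enumerations:
  assumes f: "bij_betw f T {1..dtot n d}" and g: "bij_betw g T {1..dtot n d}"
    and fP: "\<forall>i\<in>{1..n}. f ` P i = block d i" and gQ: "\<forall>j\<in>{1..n}. g ` Q j = block d j"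
    and sub: "\<And>i. P i \<subseteq> T" "\<And>j. Q j \<subseteq> T"
  obtains w where "w permutes {1..dtot n d}"
    "\<And>i j. i \<in> {1..n} \<Longrightarrow> j \<in> {1..n} \<Longrightarrow> psi n d w i j = card (P i \<inter> Q j)"
proof
  define D where "D = dtot n d"
  define w where "w y = (if y \<in> {1..D} then g (inv_into T f y) else y)" for y
  have "bij_betw (g \<circ> inv_into T f) {1..D} {1..D}"
    using bij_betw_trans[OF bij_betw_inv_into[OF f] g] by (simp add: D_def)
  moreover have "bij_betw w {1..D} {1..D} = bij_betw (g \<circ> inv_into T f) {1..D} {1..D}"
    by (rule bij_betw_cong) (simp add: w_def)
  ultimately show "w permutes {1..dtot n d}"
    unfolding permutes_altdef by (auto simp: w_def D_def)
  fix i j assume i: "i \<in> {1..n}" and j: "j \<in> {1..n}"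
  have "block d i \<subseteq> {1..D}" using block_subset[of i n d] i by (simp add: D_def dtot_eq_block_end)
  then have "w ` block d i = g ` inv_into T f ` block d i"
    by (auto simp: w_def image_comp intro!: image_cong)
  also have "inv_into T f ` block d i = P i"
    using f fP i sub by (metis bij_betw_def inv_into_image_cancel)
  finally have "w ` block d i \<inter> block d j = g ` P i \<inter> g ` Q j"
    using gQ j by simp
  also have "\<dots> = g ` (P i \<inter> Q j)"
    using g sub by (metis bij_betw_def inj_on_image_Int)
  finally have "psi n d w i j = card (g ` (P i \<inter> Q j))"
    using i j by (simp add: psi_def)
  also have "\<dots> = card (P i \<inter> Q j)"
    using g sub by (meson bij_betw_def card_image inj_on_subset le_infI1)
  finally show "psi n d w i j = card (P i \<inter> Q j)" .
qed

text \<open>Enumerate the cells of \<open>m\<close> (entry \<open>m i j\<close> contributing \<open>m i j\<close> cells) once row by row and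
  once column by column; matching the two enumerations yields a permutation with matrix \<open>m\<close>.\<close>

lemma psi_surj:
  assumes m: "m \<in> Mmat n d"
  shows "\<exists>w. w permutes {1..dtot n d} \<and> psi n d w = m"
proof -
  define T where "T = (SIGMA i:{1..n}. SIGMA j:{1..n}. {..<m i j})"
  define P where "P i = {p \<in> T. fst p = i}" for i
  define Q where "Q j = {p \<in> T. (fst \<circ> snd) p = j}" for j
  have T: "finite T" "fst ` T \<subseteq> {1..n}" "(fst \<circ> snd) ` T \<subseteq> {1..n}"
    by (auto simp: T_def)
  have "card (P i) = d i" if i: "i \<in> {1..n}" for i
  proof -
    have "P i = Pair i ` (SIGMA j:{1..n}. {..<m i j})" using i by (auto simp: P_def T_def)
    then have "card (P i) = card (SIGMA j:{1..n}. {..<m i j})"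
      by (simp add: card_image inj_on_def)
    then show ?thesis using Mmat_row_sum[OF m i] by (simp add: card_SigmaI)
  qed
  then obtain f where f: "bij_betw f T {1..dtot n d}" "\<forall>i\<in>{1..n}. f ` P i = block d i"
    using bij_betw_onto_blocks[OF T(1,2)] unfolding P_def dtot_eq_block_end by blast
  have "card (Q j) = d j" if j: "j \<in> {1..n}" for j
  proof -
    have "Q j = (\<lambda>(i, k). (i, j, k)) ` (SIGMA i:{1..n}. {..<m i j})"
      using j by (auto simp: Q_def T_def image_iff)
    moreover have "inj_on (\<lambda>(i, k). (i, j, k)) (SIGMA i:{1..n}. {..<m i j})"
      by (auto simp: inj_on_def)
    ultimately show ?thesis using Mmat_col_sum[OF m j] by (simp add: card_image card_SigmaI)
  qed
  then obtain g where g: "bij_betw g T {1..dtot n d}" "\<forall>j\<in>{1..n}. g ` Q j = block d j"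
    using bij_betw_onto_blocks[OF T(1,3)] unfolding Q_def dtot_eq_block_end by blast
  obtain w where w: "w permutes {1..dtot n d}"
    and psi: "\<And>i j. i \<in> {1..n} \<Longrightarrow> j \<in> {1..n} \<Longrightarrow> psi n d w i j = card (P i \<inter> Q j)"
    by (rule permutation_from_enumerations[OF f(1) g(1) f(2) g(2)]) (auto simp: P_def Q_def)
  have "psi n d w i j = m i j" for i j
  proof (cases "i \<in> {1..n} \<and> j \<in> {1..n}")
    case True
    then have "P i \<inter> Q j = Pair i ` Pair j ` {..<m i j}" by (auto simp: P_def Q_def T_def)
    then show ?thesis using True psi by (simp add: card_image inj_on_def)
  qed (use Mmat_outside[OF m] in \<open>auto simp: psi_def\<close>)
  then show ?thesis using w by (intro exI[of _ w]) auto
qed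

section \<open>Longest elements of double cosets\<close>

definition block_decreasing :: "nat \<Rightarrow> (nat \<Rightarrow> nat) \<Rightarrow> (nat \<Rightarrow> nat) \<Rightarrow> bool" where
  "block_decreasing n d w \<longleftrightarrow>
     (\<forall>i\<in>{1..n}. \<forall>x\<in>block d i. \<forall>y\<in>block d i. x < y \<longrightarrow> w y < w x) \<and>
     (\<forall>j\<in>{1..n}. \<forall>x\<in>{1..block_end d n}. \<forall>y\<in>{1..block_end d n}.
        w x \<in> block d j \<longrightarrow> w y \<in> block d j \<longrightarrow> x < y \<longrightarrow> w y < w x)"

lemma block_decreasing_source:
  "block_decreasing n d w \<Longrightarrow> i \<in> {1..n} \<Longrightarrow> x \<in> block d i \<Longrightarrow> y \<in> block d i \<Longrightarrow> x < y
    \<Longrightarrow> w y < w x"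
  unfolding block_decreasing_def by blast

lemma block_decreasing_target:
  "block_decreasing n d w \<Longrightarrow> j \<in> {1..n} \<Longrightarrow> x \<in> {1..block_end d n} \<Longrightarrow> y \<in> {1..block_end d n}
    \<Longrightarrow> w x \<in> block d j \<Longrightarrow> w y \<in> block d j \<Longrightarrow> x < y \<Longrightarrow> w y < w x"
  unfolding block_decreasing_def by blast

lemma transpose_block_eq:
  assumes "i \<in> {1..n}" "a \<in> block d i" "b \<in> block d i" "i' \<in> {1..n}"
  shows "transpose a b ` block d i' = block d i'"
proof -
  have "a \<in> block d i' \<longleftrightarrow> b \<in> block d i'"
    using block_disjoint[of i i' d] assms by (cases "i = i'") auto
  then show ?thesis by simp
qed

lemma psi_comp_transpose_block:
  assumes "i \<in> {1..n}" "x \<in> block d i" "y \<in> block d i"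
  shows "psi n d (w \<circ> transpose x y) = psi n d w"
proof -
  have "(w \<circ> transpose x y) ` block d i' = w ` block d i'" if "i' \<in> {1..n}" for i'
    by (simp only: image_comp[symmetric] transpose_block_eq[OF assms that])
  then show ?thesis by (auto simp: psi_def fun_eq_iff)
qed

lemma psi_transpose_comp_block:
  assumes "j \<in> {1..n}" "a \<in> block d j" "b \<in> block d j"
  shows "psi n d (transpose a b \<circ> w) = psi n d w"
proof -
  have "(transpose a b \<circ> w) ` block d i \<inter> block d j' = transpose a b ` (w ` block d i \<inter> block d j')"
    if "j' \<in> {1..n}" for i j'
  proof -
    have "(transpose a b \<circ> w) ` block d i \<inter> block d j'
        = transpose a b ` w ` block d i \<inter> transpose a b ` block d j'"
      by (simp only: image_comp[symmetric] transpose_block_eq[OF assms that])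
    then show ?thesis by (simp add: image_Int)
  qed
  then show ?thesis by (auto simp: psi_def fun_eq_iff card_image)
qed

text \<open>A permutation with the most inversions in its double coset cannot be increased by a
  transposition inside a source block or inside a target block, as both keep the double coset.\<close>

lemma block_decreasing_if_maximal:
  assumes w: "w permutes {1..block_end d n}"
    and max: "\<And>w'. w' permutes {1..block_end d n} \<Longrightarrow> psi n d w' = psi n d w
                \<Longrightarrow> n_inversions (block_end d n) w' \<le> n_inversions (block_end d n) w"
  shows "block_decreasing n d w"
proof -
  let ?D = "block_end d n"
  have no_ascent: "w y < w x"
    if xy: "x \<in> {1..?D}" "y \<in> {1..?D}" "x < y" and same: "psi n d (w \<circ> transpose x y) = psi n d w" for x y
  proof (rule ccontr)
    assume "\<not> w y < w x"
    then have "w x < w y" using permutes_apply_eq_iff[OF w, of x y] xy by auto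
    then have "n_inversions ?D w < n_inversions ?D (w \<circ> transpose x y)"
      using n_inversions_swap_less[OF w] xy by auto
    moreover have "w \<circ> transpose x y permutes {1..?D}"
      using w xy by (intro permutes_compose permutes_swap_id) auto
    ultimately show False using max same by fastforce
  qed
  have "w y < w x" if "i \<in> {1..n}" "x \<in> block d i" "y \<in> block d i" "x < y" for i x y
  proof -
    have "x \<in> {1..?D}" "y \<in> {1..?D}" using block_subset[of i n d] that by auto
    then show ?thesis using no_ascent psi_comp_transpose_block[OF that(1-3)] that(4) by blast
  qed
  moreover have "w y < w x"
    if "j \<in> {1..n}" "x \<in> {1..?D}" "y \<in> {1..?D}" "w x \<in> block d j" "w y \<in> block d j" "x < y" for j x y
  proof -
    have "transpose (w x) (w y) \<circ> w = w \<circ> transpose x y"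
      using transpose_comp_eq[OF permutes_bij[OF w]] permutes_inverses(2)[OF w] by simp
    then show ?thesis
      using no_ascent psi_transpose_comp_block[OF that(1,4,5), of w] that by simp
  qed
  ultimately show ?thesis by (auto simp: block_decreasing_def)
qed

lemma interval_if_down_closed:
  fixes E :: "nat set"
  assumes "finite E" "E \<subseteq> {lo<..}" and closed: "\<And>z z'. z \<in> E \<Longrightarrow> lo < z' \<Longrightarrow> z' < z \<Longrightarrow> z' \<in> E"
  shows "E = {lo<..lo + card E}"
proof (cases "E = {}")
  case False
  have "E = {lo<..Max E}"
  proof
    show "E \<subseteq> {lo<..Max E}" using assms by auto
    show "{lo<..Max E} \<subseteq> E"
      using closed[of "Max E"] Max_in[OF assms(1) False] by (auto simp: order.order_iff_strict)
  qed
  moreover have "lo < Max E" using Max_in[OF assms(1) False] assms(2) by auto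
  ultimately show ?thesis by (metis add_diff_inverse_nat card_greaterThanAtMost less_imp_le_nat not_le)
qed simp

lemma interval_if_up_closed:
  fixes C :: "nat set"
  assumes "C \<subseteq> {..hi}" and closed: "\<And>c c'. c \<in> C \<Longrightarrow> c < c' \<Longrightarrow> c' \<le> hi \<Longrightarrow> c' \<in> C"
  shows "C = {Suc hi - card C..hi}"
proof (cases "C = {}")
  case False
  have fin: "finite C" using assms(1) finite_subset by blast
  have "C = {Min C..hi}"
  proof
    show "C \<subseteq> {Min C..hi}" using assms(1) fin by auto
    show "{Min C..hi} \<subseteq> C"
      using closed[of "Min C"] Min_in[OF fin False] by (auto simp: order.order_iff_strict)
  qed
  moreover have "Min C \<le> hi" using Min_in[OF fin False] assms(1) by auto
  ultimately show ?thesis by (metis Suc_diff_le card_atLeastAtMost diff_Suc_Suc diff_diff_cancel le_SucI)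
qed simp

text \<open>For a block-decreasing permutation the rank is determined by its values at the corners of
  the block grid: it interpolates linearly, capped by the next corner value, along each row block
  and along each column block.\<close>

lemma rank_interpolate_source:
  assumes w: "block_decreasing n d w" and i: "i \<in> {1..n}" and p: "p \<le> d i"
  shows "rank w (block_end d (i - 1) + p) t
       = min (rank w (block_end d (i - 1)) t + p) (rank w (block_end d i) t)"
proof -
  define lo where "lo = block_end d (i - 1)"
  have hi: "block_end d i = lo + d i" using block_end_Suc[of d "i - 1"] i by (simp add: lo_def)
  have blk: "block d i = {lo + 1..lo + d i}" using block_eq[of i d] i hi by (simp add: lo_def)
  define E where "E = {z \<in> block d i. t \<le> w z}"
  define c where "c = card E"
  have E: "E = {lo<..lo + c}"
    unfolding c_def
  proof (rule interval_if_down_closed)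
    fix z z' assume "z \<in> E" "lo < z'" "z' < z"
    moreover from this have "z' \<in> block d i" by (auto simp: E_def blk)
    ultimately show "z' \<in> E"
      using block_decreasing_source[OF w i, of z' z] by (auto simp: E_def)
  qed (auto simp: E_def blk)
  have "{z \<in> {lo + 1..lo + p}. t \<le> w z} = {z \<in> E. z \<le> lo + p}"
    using p by (auto simp: E_def blk)
  also have "\<dots> = {lo<..lo + min c p}" by (auto simp: E)
  finally have "card {z \<in> {lo + 1..lo + p}. t \<le> w z} = min (card E) p" by (simp add: c_def)
  moreover have "card {z \<in> {lo + 1..lo + d i}. t \<le> w z} = card E" by (simp add: E_def blk)
  ultimately show ?thesis unfolding hi lo_def[symmetric] rank_add by simp
qed

lemma block_decreasing_image_interval:
  assumes w: "w permutes {1..block_end d n}" and dec: "block_decreasing n d w"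
    and j: "j \<in> {1..n}" and x: "x \<le> block_end d n"
  shows "\<exists>c \<le> d j. w ` {z \<in> {1..x}. w z \<in> block d j} = {Suc (block_end d j) - c..block_end d j}"
proof -
  define F where "F = {z \<in> {1..x}. w z \<in> block d j}"
  have blk: "block d j = {block_end d (j - 1) + 1..block_end d j}" using block_eq[of j d] j by simp
  have "w ` F = {Suc (block_end d j) - card (w ` F)..block_end d j}"
  proof (rule interval_if_up_closed)
    fix v v' assume v: "v \<in> w ` F" "v < v'" "v' \<le> block_end d j"
    then obtain z where z: "z \<in> F" "v = w z" by auto
    have v': "v' \<in> block d j" using v z by (auto simp: F_def blk)
    then have "v' \<in> {1..block_end d n}" using block_subset[of j n d] j by auto
    define z' where "z' = inv w v'"
    have z': "z' \<in> {1..block_end d n}" "w z' = v'"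
      using \<open>v' \<in> {1..block_end d n}\<close> permutes_inverses(1)[OF w]
        permutes_in_image[OF permutes_inv[OF w]] by (simp_all add: z'_def)
    have "z \<in> {1..block_end d n}" "w z \<in> block d j" using z x by (auto simp: F_def)
    have "\<not> z < z'"
    proof
      assume "z < z'"
      then have "w z' < w z"
        using block_decreasing_target[OF dec j \<open>z \<in> {1..block_end d n}\<close> z'(1)
            \<open>w z \<in> block d j\<close>] z'(2) v' by blast
      then show False using z(2) z'(2) v(2) by simp
    qed
    moreover have "z \<noteq> z'" using z z' v by auto
    ultimately have "z' \<in> F" using z z' v' by (auto simp: F_def)
    then show "v' \<in> w ` F" using z' by auto
  qed (auto simp: F_def blk)
  moreover have "card (w ` F) \<le> d j"
    using card_mono[of "block d j" "w ` F"] card_block[of j d] j by (fastforce simp: F_def)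
  ultimately show ?thesis unfolding F_def by blast
qed

lemma rank_interpolate_target:
  assumes w: "w permutes {1..block_end d n}" and dec: "block_decreasing n d w"
    and j: "j \<in> {1..n}" and q: "q \<le> d j" and x: "x \<le> block_end d n"
  shows "rank w x (block_end d (j - 1) + 1 + q)
       = min (rank w x (block_end d j + 1) + (d j - q)) (rank w x (block_end d (j - 1) + 1))"
proof -
  define lo hi where "lo = block_end d (j - 1)" and "hi = block_end d j"
  have hi: "hi = lo + d j" using block_end_Suc[of d "j - 1"] j by (simp add: lo_def hi_def)
  have blk: "block d j = {lo + 1..hi}" using block_eq[of j d] j by (simp add: lo_def hi_def)
  define F where "F = {z \<in> {1..x}. w z \<in> block d j}"
  obtain c where C: "w ` F = {Suc hi - c..hi}" "c \<le> hi - lo"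
    using block_decreasing_image_interval[OF w dec j x] hi by (auto simp: F_def hi_def)
  have corner: "rank w x th = rank w x (hi + 1) + min c (hi + 1 - th)"
    if th: "lo + 1 \<le> th" "th \<le> hi + 1" for th
  proof -
    have "rank w x th = rank w x (hi + 1) + card {y \<in> {1..x}. th \<le> w y \<and> w y < hi + 1}"
      using rank_split[of th "hi + 1" w x] th by simp
    also have "{y \<in> {1..x}. th \<le> w y \<and> w y < hi + 1} = {z \<in> F. th \<le> w z}"
      using th by (auto simp: F_def blk)
    also have "card {z \<in> F. th \<le> w z} = card {v \<in> w ` F. th \<le> v}"
    proof -
      have "inj_on w {z \<in> F. th \<le> w z}" using permutes_inj[OF w] inj_on_subset by blast
      then have "card (w ` {z \<in> F. th \<le> w z}) = card {z \<in> F. th \<le> w z}" by (rule card_image)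
      moreover have "w ` {z \<in> F. th \<le> w z} = {v \<in> w ` F. th \<le> v}" by auto
      ultimately show ?thesis by simp
    qed
    also have "{v \<in> w ` F. th \<le> v} = {max (Suc hi - c) th..hi}" unfolding C(1) by auto
    also have "card {max (Suc hi - c) th..hi} = min c (hi + 1 - th)"
      using th C(2) by (auto simp: max_def min_def)
    finally show ?thesis .
  qed
  show ?thesis
    unfolding lo_def[symmetric] hi_def[symmetric]
    using corner[of "lo + 1 + q"] corner[of "lo + 1"] q hi C by simp
qed

lemma block_end_decompose:
  assumes "1 \<le> n" "x \<le> block_end d n"
  shows "\<exists>i\<in>{1..n}. \<exists>p\<le>d i. x = block_end d (i - 1) + p"
  using assms
proof (induction n)
  case (Suc n)
  show ?case
  proof (cases "1 \<le> n \<and> x \<le> block_end d n")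
    case True
    then show ?thesis using Suc.IH by fastforce
  next
    case False
    then have "block_end d n \<le> x"
      by (cases n) auto
    then have "x - block_end d n \<le> d (Suc n) \<and> x = block_end d (Suc n - 1) + (x - block_end d n)"
      using Suc.prems by (auto simp: block_end_Suc)
    then show ?thesis by (intro bexI[of _ "Suc n"]) auto
  qed
qed simp

lemma rank_le_if_corners_le:
  assumes w1: "w1 permutes {1..block_end d n}" and w2: "w2 permutes {1..block_end d n}"
    and dec1: "block_decreasing n d w1" and dec2: "block_decreasing n d w2"
    and corners: "\<And>k j. k \<le> n \<Longrightarrow> j \<le> n \<Longrightarrow>
       rank w1 (block_end d k) (Suc (block_end d j)) \<le> rank w2 (block_end d k) (Suc (block_end d j))"
  shows "rank_le (block_end d n) w1 w2"
  unfolding rank_le_def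
proof (intro allI impI ballI)
  fix x t assume x: "x \<le> block_end d n" and t: "t \<in> {1..block_end d n}"
  have n: "1 \<le> n" using t by (cases n) auto
  have "t - 1 \<le> block_end d n" using t by auto
  then obtain j q where jq: "j \<in> {1..n}" "q \<le> d j" "t - 1 = block_end d (j - 1) + q"
    using block_end_decompose[OF n] by blast
  have t_eq: "t = block_end d (j - 1) + 1 + q" using jq t by auto
  have rows: "rank w1 (block_end d k) t \<le> rank w2 (block_end d k) t" if k: "k \<le> n" for k
  proof -
    have k_end: "block_end d k \<le> block_end d n" using k by (rule block_end_mono)
    have "rank w1 (block_end d k) (block_end d j + 1) \<le> rank w2 (block_end d k) (block_end d j + 1)"
      "rank w1 (block_end d k) (block_end d (j - 1) + 1) \<le> rank w2 (block_end d k) (block_end d (j - 1) + 1)"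
      using corners[OF k, of j] corners[OF k, of "j - 1"] jq by auto
    then show ?thesis
      unfolding t_eq rank_interpolate_target[OF w1 dec1 jq(1,2) k_end]
        rank_interpolate_target[OF w2 dec2 jq(1,2) k_end] by auto
  qed
  obtain i p where ip: "i \<in> {1..n}" "p \<le> d i" "x = block_end d (i - 1) + p"
    using block_end_decompose[OF n x] by auto
  have "rank w1 (block_end d (i - 1)) t \<le> rank w2 (block_end d (i - 1)) t"
    "rank w1 (block_end d i) t \<le> rank w2 (block_end d i) t"
    using rows[of "i - 1"] rows[of i] ip by auto
  then show "rank w1 x t \<le> rank w2 x t"
    unfolding ip(3) rank_interpolate_source[OF dec1 ip(1,2)] rank_interpolate_source[OF dec2 ip(1,2)]
    by auto
qed

lemma rank_inject:
  assumes u: "u permutes {1..D}" and v: "v permutes {1..D}"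
    and eq: "\<And>x t. x \<le> D \<Longrightarrow> t \<in> {1..D} \<Longrightarrow> rank u x t = rank v x t"
  shows "u = v"
proof
  fix x
  show "u x = v x"
  proof (cases "x \<in> {1..D}")
    case True
    then have x: "Suc (x - 1) = x" by simp
    have same: "t \<le> u x \<longleftrightarrow> t \<le> v x" if t: "t \<in> {1..D}" for t
    proof -
      have "rank u (x - 1) t + (if t \<le> u x then 1 else 0) = rank u x t"
        using rank_Suc[of u "x - 1" t] unfolding x by simp
      also have "\<dots> = rank v x t" using eq[of x t] True t by simp
      also have "\<dots> = rank v (x - 1) t + (if t \<le> v x then 1 else 0)"
        using rank_Suc[of v "x - 1" t] unfolding x by simp
      finally have "rank u (x - 1) t + (if t \<le> u x then 1 else 0)
          = rank v (x - 1) t + (if t \<le> v x then 1 else 0)" .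
      moreover have "rank u (x - 1) t = rank v (x - 1) t" using True by (intro eq t) auto
      ultimately show ?thesis by (cases "t \<le> u x"; cases "t \<le> v x") simp_all
    qed
    have "u x \<le> v x" using same[of "u x"] permutes_in_image[OF u, of x] True by simp
    moreover have "v x \<le> u x" using same[of "v x"] permutes_in_image[OF v, of x] True by simp
    ultimately show ?thesis by simp
  next
    case False
    then show ?thesis using u v by (simp add: permutes_not_in)
  qed
qed

lemma block_decreasing_unique:
  assumes w1: "w1 permutes {1..block_end d n}" and w2: "w2 permutes {1..block_end d n}"
    and dec1: "block_decreasing n d w1" and dec2: "block_decreasing n d w2"
    and same: "psi n d w1 = psi n d w2"
  shows "w1 = w2"
proof -
  have "rank w1 (block_end d k) (Suc (block_end d j)) = rank w2 (block_end d k) (Suc (block_end d j))"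
    if "k \<le> n" "j \<le> n" for k j
    using rank_block_corner_cases[OF w1 that] rank_block_corner_cases[OF w2 that] same by simp
  then have "rank_le (block_end d n) w1 w2" "rank_le (block_end d n) w2 w1"
    using rank_le_if_corners_le[OF w1 w2 dec1 dec2] rank_le_if_corners_le[OF w2 w1 dec2 dec1] by auto
  then show ?thesis
    using rank_inject[OF w1 w2] unfolding rank_le_def by (meson order.antisym)
qed

text \<open>A maximiser of the Coxeter length exists and every maximiser is block-decreasing, hence
  unique; so the definite description in \<^const>\<open>longest\<close> denotes it.\<close>

lemma longest_spec:
  assumes m: "m \<in> Mmat n d"
  shows "longest n d m permutes {1..block_end d n} \<and> psi n d (longest n d m) = m
    \<and> block_decreasing n d (longest n d m)"
proof -
  define D where "D = dtot n d"
  define A where "A = dcoset n d m"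
  have D: "D = block_end d n" by (simp add: D_def dtot_eq_block_end)
  have A: "w \<in> A \<longleftrightarrow> w permutes {1..block_end d n} \<and> psi n d w = m" for w
    by (simp add: A_def dcoset_def dtot_eq_block_end)
  have fin: "finite A"
    using finite_permutations[of "{1..D}"] by (rule finite_subset[rotated]) (auto simp: A D)
  moreover have "A \<noteq> {}" using psi_surj[OF m] by (auto simp: A dtot_eq_block_end)
  ultimately have "Max (coxlen D ` A) \<in> coxlen D ` A" by simp
  then obtain w0 where "w0 \<in> A" "coxlen D w0 = Max (coxlen D ` A)" by auto
  moreover have "\<forall>w\<in>A. coxlen D w \<le> Max (coxlen D ` A)" using fin by simp
  ultimately have w0: "w0 \<in> A" "\<forall>w\<in>A. coxlen D w \<le> coxlen D w0" by auto
  have dec: "block_decreasing n d w" if w: "w \<in> A" "\<forall>w'\<in>A. coxlen D w' \<le> coxlen D w" for w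
  proof (rule block_decreasing_if_maximal)
    show perm: "w permutes {1..block_end d n}" using w(1) by (simp add: A)
    fix w' assume "w' permutes {1..block_end d n}" "psi n d w' = psi n d w"
    moreover from this have "coxlen D w' \<le> coxlen D w" using w by (simp add: A)
    ultimately show "n_inversions (block_end d n) w' \<le> n_inversions (block_end d n) w"
      using coxlen_eq_n_inversions perm unfolding D by metis
  qed
  have "longest n d m = w0"
    unfolding longest_def D_def[symmetric] A_def[symmetric]
  proof (rule the_equality)
    fix w assume w: "w \<in> A \<and> (\<forall>w'\<in>A. coxlen D w' \<le> coxlen D w)"
    show "w = w0"
      using w w0 A by (intro block_decreasing_unique[of w d n w0] dec) auto
  qed (use w0 in blast)
  then show ?thesis using w0 dec A by auto
qed

section \<open>The Bruhat order on \<open>M'\<close>\<close>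

lemma mat_le_imp_psum_le:
  assumes m: "m \<in> Mmat n d" and m': "m' \<in> Mmat n d" and le: "mat_le n d m m'"
    and k: "k \<in> {1..n}" and j: "j \<in> {1..n}"
  shows "psum n m k j \<le> psum n m' k j"
proof -
  note w = longest_spec[OF m] and w' = longest_spec[OF m']
  have "bruhat_le (block_end d n) (longest n d m) (longest n d m')"
    using le by (simp add: mat_le_def dtot_eq_block_end)
  then have rank: "rank (longest n d m) x t \<le> rank (longest n d m') x t" for x t
    using bruhat_le_rank_mono w by blast
  have "psum n m k j = rank (longest n d m) (block_end d k) (Suc (block_end d (j - 1)))"
    using rank_block_corner[of "longest n d m" n d k j] w k j by (simp add: dtot_eq_block_end)
  also have "\<dots> \<le> rank (longest n d m') (block_end d k) (Suc (block_end d (j - 1)))"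
    by (rule rank)
  also have "\<dots> = psum n m' k j"
    using rank_block_corner[of "longest n d m'" n d k j] w' k j by (simp add: dtot_eq_block_end)
  finally show ?thesis .
qed

lemma Mprime_downward_closed:
  assumes "m \<in> Mprime n d" "m' \<in> Mmat n d" "mat_le n d m' m"
  shows "m' \<in> Mprime n d"
  by (rule Mprime_if_psum_le[OF assms(1,2) mat_le_imp_psum_le[OF assms(2) MprimeD[OF assms(1)] assms(3)]])

lemma mat_le_Mprime_iff:
  assumes m: "m \<in> Mprime n d" and m': "m' \<in> Mprime n d"
  shows "mat_le n d m m' \<longleftrightarrow> (\<forall>i\<in>{1..n}. \<forall>j\<in>{1..n}. i < j \<longrightarrow> psum n m i j \<le> psum n m' i j)"
proof
  assume "mat_le n d m m'"
  then show "\<forall>i\<in>{1..n}. \<forall>j\<in>{1..n}. i < j \<longrightarrow> psum n m i j \<le> psum n m' i j"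
    using mat_le_imp_psum_le[OF MprimeD[OF m] MprimeD[OF m']] by blast
next
  assume upper: "\<forall>i\<in>{1..n}. \<forall>j\<in>{1..n}. i < j \<longrightarrow> psum n m i j \<le> psum n m' i j"
  have psum_le: "psum n m k j \<le> psum n m' k j" if "k \<le> n" "j \<in> {1..n}" for k j
  proof -
    consider "k = 0" | "1 \<le> k" "k < j" | "j \<le> k" by linarith
    then show ?thesis
    proof cases
      case 1
      then show ?thesis by (simp add: psum_def)
    next
      case 2
      then show ?thesis using upper that by auto
    next
      case 3
      then show ?thesis using psum_Mprime[OF m, of j k] psum_Mprime[OF m', of j k] that by simp
    qed
  qed
  note w = longest_spec[OF MprimeD[OF m]] and w' = longest_spec[OF MprimeD[OF m']]
  have "rank (longest n d m) (block_end d k) (Suc (block_end d j))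
      \<le> rank (longest n d m') (block_end d k) (Suc (block_end d j))"
    if "k \<le> n" "j \<le> n" for k j
    using rank_block_corner_cases[OF _ that, of "longest n d m"]
      rank_block_corner_cases[OF _ that, of "longest n d m'"] w w' psum_le[of k "Suc j"] that
    by simp
  then have "rank_le (block_end d n) (longest n d m) (longest n d m')"
    using rank_le_if_corners_le w w' by blast
  then have "bruhat_le (block_end d n) (longest n d m) (longest n d m')"
    using rank_le_imp_bruhat_le w w' by blast
  then show "mat_le n d m m'" by (simp add: mat_le_def dtot_eq_block_end)
qed

theorem proposition3p1:
  fixes n :: nat and d :: "nat \<Rightarrow> nat"
  shows "(\<forall>m\<in>Mprime n d. \<forall>m'\<in>Mmat n d. mat_le n d m' m \<longrightarrow> m' \<in> Mprime n d)
    \<and> (\<forall>m\<in>Mprime n d. \<forall>i\<in>{1..n}. \<forall>j\<in>{1..n}. j \<le> i \<longrightarrow> psum n m i j = (\<Sum>k=j..i. d k))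
    \<and> (\<forall>m\<in>Mprime n d. \<forall>m'\<in>Mprime n d. mat_le n d m m' \<longleftrightarrow>
          (\<forall>i\<in>{1..n}. \<forall>j\<in>{1..n}. i < j \<longrightarrow> psum n m i j \<le> psum n m' i j))
    \<and> (\<forall>m\<in>Mprime n d. \<forall>i\<in>{2..n}. m i (i - 1) = psum n m (i - 1) i)
    \<and> bij_betw (Phi n) (Mseg n d) (Mprime n d)"
proof (intro conjI)
  show "\<forall>m\<in>Mprime n d. \<forall>m'\<in>Mmat n d. mat_le n d m' m \<longrightarrow> m' \<in> Mprime n d"
    using Mprime_downward_closed by blast
  show "\<forall>m\<in>Mprime n d. \<forall>i\<in>{1..n}. \<forall>j\<in>{1..n}. j \<le> i \<longrightarrow> psum n m i j = (\<Sum>k=j..i. d k)"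
    using psum_Mprime by auto
  show "\<forall>m\<in>Mprime n d. \<forall>m'\<in>Mprime n d. mat_le n d m m' \<longleftrightarrow>
      (\<forall>i\<in>{1..n}. \<forall>j\<in>{1..n}. i < j \<longrightarrow> psum n m i j \<le> psum n m' i j)"
    using mat_le_Mprime_iff by blast
  show "\<forall>m\<in>Mprime n d. \<forall>i\<in>{2..n}. m i (i - 1) = psum n m (i - 1) i"
    using Mprime_subdiagonal_eq_psum by auto
  show "bij_betw (Phi n) (Mseg n d) (Mprime n d)"
    by (rule bij_betw_Phi)
qed

end
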